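(* The following problem is undecidable: given a finite alphabet $\Sigma$ and a $\mathsf{C\text{-}RASP}$ program $\phi$ over $\Sigma$, decide whether $L(\phi)=\emptyset$.
   Context: $\mathsf{C\text{-}RASP}$ formulas over a finite alphabet $\Sigma$ are given by the grammar $\phi ::= \sigma \mid \Diamond^{-}\phi \mid \Box^{-}\phi \mid \neg\phi \mid \phi_1\wedge\phi_2 \mid \sum_{t\in\mathcal{T}}\alpha_t t\sim k$, with terms $t ::= \#[\phi] \mid c$, where $\sigma\in\Sigma$, $\alpha_t,k,c\in\mathbb{Z}$, $\mathcal T$ is a finite set of terms, and ${\sim}\in\{<,\le,=,\ge,>\}$. For a string $w=w_1\cdots w_n$ and a position $i\in[1,n]$: $w,i\models\sigma$ iff $w_i=\sigma$; $\neg$ and $\wedge$ have their usual meaning; $w,i\models\Diamond^{-}\phi$ iff $w,j\models\phi$ for some $j<i$; $w,i\models\Box^{-}\phi$ iff $w,j\models\phi$ for all $j\le i$; the term $\#[\phi]$ evaluates at $(w,i)$ to $|\{j\in[1,i] : w,j\models\phi\}|$ and the term $c$ to $c$; $w,i\models\sum_t\alpha_t t\sim k$ iff the resulting integer comparison holds. We write $w\models\phi$ iff $w,|w|\models\phi$, and $L(\phi)=\{w\in\Sigma^*: w\models\phi\}$. A program is a straight-line (DAG) representation $(\phi_1,\dots,\phi_n)$ in which each $\phi_i$ may refer to earlier $\phi_j$ ($j<i$); it denotes $\phi_n$. *)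

theory Defs
  imports Main "HOL-Library.Nat_Bijection"
begin

text \<open>Alphabet symbols are natural numbers; an alphabet of size n is the set {0..<n}.
  A program is a list of lines (phi_1, ..., phi_m); a line may refer to an earlier
  line j (0-based index) via Ref j.\<close>

datatype cmp = Lt | Le | Eq | Ge | Gt

datatype cform =
    Sym nat
  | Ref nat
  | Prev cform
  | Hist cform
  | Neg cform
  | Conj cform cform
  | Cmp lsum cmp int
and cterm =
    Count cform
  | Const int
and lsum =
    LNil
  | LCons int cterm lsum

primrec cmp_holds :: "cmp \<Rightarrow> int \<Rightarrow> int \<Rightarrow> bool" where
  "cmp_holds Lt a b = (a < b)"
| "cmp_holds Le a b = (a \<le> b)"
| "cmp_holds Eq a b = (a = b)"
| "cmp_holds Ge a b = (a \<ge> b)"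
| "cmp_holds Gt a b = (a > b)"

text \<open>Positions are 1-based: w,i |= sigma iff w_i = sigma, i.e. w ! (i - 1) = sigma.
  env gives the semantics of the earlier program lines.\<close>

type_synonym word = "nat list"
type_synonym env = "(word \<Rightarrow> nat \<Rightarrow> bool) list"

primrec sat :: "env \<Rightarrow> cform \<Rightarrow> word \<Rightarrow> nat \<Rightarrow> bool"
  and tval :: "env \<Rightarrow> cterm \<Rightarrow> word \<Rightarrow> nat \<Rightarrow> int"
  and lval :: "env \<Rightarrow> lsum \<Rightarrow> word \<Rightarrow> nat \<Rightarrow> int" where
  "sat E (Sym a) w i = (1 \<le> i \<and> i \<le> length w \<and> w ! (i - 1) = a)"
| "sat E (Ref j) w i = (j < length E \<and> (E ! j) w i)"
| "sat E (Prev f) w i = (\<exists>j. 1 \<le> j \<and> j < i \<and> sat E f w j)"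
| "sat E (Hist f) w i = (\<forall>j. 1 \<le> j \<and> j \<le> i \<longrightarrow> sat E f w j)"
| "sat E (Neg f) w i = (\<not> sat E f w i)"
| "sat E (Conj f g) w i = (sat E f w i \<and> sat E g w i)"
| "sat E (Cmp s c k) w i = cmp_holds c (lval E s w i) k"
| "tval E (Count f) w i = int (card {j. 1 \<le> j \<and> j \<le> i \<and> sat E f w j})"
| "tval E (Const c) w i = c"
| "lval E LNil w i = 0"
| "lval E (LCons a t s) w i = a * tval E t w i + lval E s w i"

definition prog_den :: "cform list \<Rightarrow> env" where
  "prog_den ps = foldl (\<lambda>E p. E @ [sat E p]) [] ps"

definition accepts :: "cform list \<Rightarrow> word \<Rightarrow> bool" where
  "accepts ps w = (ps \<noteq> [] \<and> last (prog_den ps) w (length w))"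

definition lang :: "nat \<Rightarrow> cform list \<Rightarrow> word set" where
  "lang n ps = {w. set w \<subseteq> {..<n} \<and> accepts ps w}"

primrec wf_form :: "nat \<Rightarrow> nat \<Rightarrow> cform \<Rightarrow> bool"
  and wf_term :: "nat \<Rightarrow> nat \<Rightarrow> cterm \<Rightarrow> bool"
  and wf_lsum :: "nat \<Rightarrow> nat \<Rightarrow> lsum \<Rightarrow> bool" where
  "wf_form n m (Sym a) = (a < n)"
| "wf_form n m (Ref j) = (j < m)"
| "wf_form n m (Prev f) = wf_form n m f"
| "wf_form n m (Hist f) = wf_form n m f"
| "wf_form n m (Neg f) = wf_form n m f"
| "wf_form n m (Conj f g) = (wf_form n m f \<and> wf_form n m g)"
| "wf_form n m (Cmp s c k) = wf_lsum n m s"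
| "wf_term n m (Count f) = wf_form n m f"
| "wf_term n m (Const c) = True"
| "wf_lsum n m LNil = True"
| "wf_lsum n m (LCons a t s) = (wf_term n m t \<and> wf_lsum n m s)"

definition wf_prog :: "nat \<Rightarrow> cform list \<Rightarrow> bool" where
  "wf_prog n ps = (ps \<noteq> [] \<and> (\<forall>i < length ps. wf_form n i (ps ! i)))"

primrec enc_cmp :: "cmp \<Rightarrow> nat" where
  "enc_cmp Lt = 0" | "enc_cmp Le = 1" | "enc_cmp Eq = 2" | "enc_cmp Ge = 3" | "enc_cmp Gt = 4"

primrec enc_form :: "cform \<Rightarrow> nat"
  and enc_term :: "cterm \<Rightarrow> nat"
  and enc_lsum :: "lsum \<Rightarrow> nat" where
  "enc_form (Sym a) = prod_encode (0, a)"
| "enc_form (Ref j) = prod_encode (1, j)"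
| "enc_form (Prev f) = prod_encode (2, enc_form f)"
| "enc_form (Hist f) = prod_encode (3, enc_form f)"
| "enc_form (Neg f) = prod_encode (4, enc_form f)"
| "enc_form (Conj f g) = prod_encode (5, prod_encode (enc_form f, enc_form g))"
| "enc_form (Cmp s c k) =
     prod_encode (6, prod_encode (enc_lsum s, prod_encode (enc_cmp c, int_encode k)))"
| "enc_term (Count f) = prod_encode (0, enc_form f)"
| "enc_term (Const c) = prod_encode (1, int_encode c)"
| "enc_lsum LNil = 0"
| "enc_lsum (LCons a t s) =
     Suc (prod_encode (int_encode a, prod_encode (enc_term t, enc_lsum s)))"

definition enc_instance :: "nat \<Rightarrow> cform list \<Rightarrow> nat" where
  "enc_instance n ps = prod_encode (n, list_encode (map enc_form ps))"

datatype recf =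
    Z
  | S
  | Proj nat
  | Comp recf "recf list"
  | Prim recf recf
  | Mu recf

inductive eval :: "recf \<Rightarrow> nat list \<Rightarrow> nat \<Rightarrow> bool" where
  eval_Z: "eval Z xs 0"
| eval_S: "eval S (x # xs) (Suc x)"
| eval_Proj: "i < length xs \<Longrightarrow> eval (Proj i) xs (xs ! i)"
| eval_Comp: "list_all2 (\<lambda>g y. eval g xs y) gs ys \<Longrightarrow> eval f ys z \<Longrightarrow> eval (Comp f gs) xs z"
| eval_Prim0: "eval f xs z \<Longrightarrow> eval (Prim f g) (0 # xs) z"
| eval_PrimS: "eval (Prim f g) (n # xs) r \<Longrightarrow> eval g (n # r # xs) z
                 \<Longrightarrow> eval (Prim f g) (Suc n # xs) z"
| eval_Mu: "eval f (n # xs) 0 \<Longrightarrow> (\<forall>m < n. \<exists>k. eval f (m # xs) (Suc k))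
              \<Longrightarrow> eval (Mu f) xs n"

end

(* C-RASP can recognise the runs of a register machine.  A run on input x is written as x
   copies of a load symbol 0 followed by one symbol per transition.  At every position the
   program compares counts: transitions into minus transitions out of a label single out the
   current label, increments minus decrements of a register give its contents, and a zero
   test is checked against that difference.  The input x occurs only in the first program
   line #[0] = x.

   Suppose a partial recursive function f decided emptiness.  The map sending c to the code
   of the instance (c + 1, [#[0] = c, phi]), where phi is any formula with code c, is
   computable; compose it with f and compile the result into a register machine P that
   halts at label length P exactly when the answer is nonzero, i.e. when the language is
   empty.  P does not depend on c, so we may take for phi the formula recognising the runs
   of P that reach label length P.  Then the language is nonempty iff P reaches that label
   on input c iff f declares the language empty. *)

theory Submission
  imports Defs
begin

section \<open>Partial recursive functions\<close>

inductive_cases eval_ZE: "eval Z xs y"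
inductive_cases eval_SE: "eval S xs y"
inductive_cases eval_ProjE: "eval (Proj i) xs y"
inductive_cases eval_CompE: "eval (Comp f gs) xs y"
inductive_cases eval_PrimE: "eval (Prim f g) xs y"
inductive_cases eval_MuE: "eval (Mu f) xs y"

lemma eval_deterministic: "eval f xs y \<Longrightarrow> eval f xs y' \<Longrightarrow> y = y'"
proof (induction arbitrary: y' rule: eval.induct)
  case (eval_Comp xs gs ys f z)
  from eval_Comp.prems obtain ys' where gs: "list_all2 (\<lambda>g y. eval g xs y) gs ys'" and "eval f ys' y'"
    by (blast elim: eval_CompE)
  moreover from eval_Comp.IH(1) gs have "ys = ys'"
    by (auto simp: list_all2_conv_all_nth intro: nth_equalityI)
  ultimately show ?case using eval_Comp.IH(2) by blast
next
  case (eval_Mu f n xs)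
  from eval_Mu.prems have "eval f (y' # xs) 0" "\<forall>m<y'. \<exists>k. eval f (m # xs) (Suc k)"
    by (blast elim: eval_MuE)+
  with eval_Mu.IH show ?case
    by (metis linorder_neqE_nat nat.distinct(1))
qed (blast elim: eval_ZE eval_SE eval_ProjE eval_PrimE)+

lemma eval_Proj_eq: "i < length xs \<Longrightarrow> y = xs ! i \<Longrightarrow> eval (Proj i) xs y"
  by (simp add: eval_Proj)

lemma eval_Comp1: "eval g xs y \<Longrightarrow> eval f [y] z \<Longrightarrow> eval (Comp f [g]) xs z"
  by (rule eval_Comp[where ys = "[y]"]) auto

lemma eval_Comp2:
  "eval g1 xs y1 \<Longrightarrow> eval g2 xs y2 \<Longrightarrow> eval f [y1, y2] z \<Longrightarrow> eval (Comp f [g1, g2]) xs z"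
  by (rule eval_Comp[where ys = "[y1, y2]"]) auto

lemma eval_Proj0: "eval (Proj 0) (x # xs) x"
  using eval_Proj[of 0 "x # xs"] by simp

lemma eval_Comp_S: "eval g xs y \<Longrightarrow> eval (Comp S [g]) xs (Suc y)"
  by (rule eval_Comp1) (auto intro: eval_S)

lemma eval_S_eq: "y = Suc x \<Longrightarrow> eval S [x] y"
  by (simp add: eval_S)

primrec rconst :: "nat \<Rightarrow> recf" where
  "rconst 0 = Z"
| "rconst (Suc k) = Comp S [rconst k]"

lemma eval_rconst: "eval (rconst k) xs k"
  by (induction k) (auto intro: eval_Z eval_Comp1 eval_S)

definition radd :: recf where
  "radd = Prim (Proj 0) (Comp S [Proj 1])"

lemma eval_radd: "eval radd [m, n] (m + n)"
proof (induction m)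
  case 0
  show ?case unfolding radd_def by (rule eval_Prim0) (rule eval_Proj_eq; simp)
next
  case (Suc m)
  have "eval (Comp S [Proj 1]) [m, m + n, n] (Suc m + n)"
    by (rule eval_Comp1[where y = "m + n"]) (auto intro: eval_Proj_eq eval_S_eq)
  with Suc show ?case unfolding radd_def by (rule eval_PrimS)
qed

lemma eval_radd_eq: "y = m + n \<Longrightarrow> eval radd [m, n] y"
  by (simp add: eval_radd)

definition rtriangle :: recf where
  "rtriangle = Prim Z (Comp radd [Comp S [Proj 0], Proj 1])"

lemma eval_rtriangle: "eval rtriangle [n] (triangle n)"
proof (induction n)
  case 0
  show ?case unfolding rtriangle_def by (auto intro: eval_Prim0 eval_Z)
next
  case (Suc n)
  have "eval (Comp radd [Comp S [Proj 0], Proj 1]) [n, triangle n] (Suc n + triangle n)"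
    by (auto intro!: eval_Comp2 eval_Comp1 eval_Proj_eq eval_S_eq eval_radd_eq)
  with Suc have "eval rtriangle [Suc n] (Suc n + triangle n)"
    unfolding rtriangle_def by (rule eval_PrimS)
  then show ?case by (simp add: add.commute)
qed

definition rprod_encode :: recf where
  "rprod_encode = Comp radd [Comp rtriangle [Comp radd [Proj 0, Proj 1]], Proj 0]"

lemma eval_rprod_encode: "eval rprod_encode [m, n] (prod_encode (m, n))"
  unfolding rprod_encode_def prod_encode_def
  by (auto intro!: eval_Comp2 eval_Comp1 eval_Proj_eq eval_radd_eq eval_rtriangle)

section \<open>Register machines\<close>

datatype instr = Inc nat nat | is_Dec: Dec nat nat nat

type_synonym config = "nat \<times> (nat \<Rightarrow> nat)"

fun step :: "instr list \<Rightarrow> config \<Rightarrow> config option" where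
  "step p (l, R) = (if l < length p then
     (case p ! l of
        Inc r l' \<Rightarrow> Some (l', R(r := Suc (R r)))
      | Dec r l1 l2 \<Rightarrow> if R r = 0 then Some (l2, R) else Some (l1, R(r := R r - 1)))
     else None)"

definition mstep :: "instr list \<Rightarrow> config \<Rightarrow> config \<Rightarrow> bool" where
  "mstep p c c' \<longleftrightarrow> step p c = Some c'"

abbreviation reach :: "instr list \<Rightarrow> config \<Rightarrow> config \<Rightarrow> bool" where
  "reach p \<equiv> (mstep p)\<^sup>*\<^sup>*"

lemma reach_halted:
  "reach p c c1 \<Longrightarrow> reach p c c2 \<Longrightarrow> step p c2 = None \<Longrightarrow> reach p c1 c2"
proof (induction arbitrary: c2 rule: converse_rtranclp_induct)
  case (step c c')
  from step.prems(1) show ?case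
  proof (cases rule: converse_rtranclpE)
    case base
    with step.hyps(1) step.prems(2) show ?thesis by (simp add: mstep_def)
  next
    case (step c'')
    with \<open>mstep p c c'\<close> have "c'' = c'" by (simp add: mstep_def)
    with step.IH step.prems(2) \<open>reach p c'' c2\<close> show ?thesis by simp
  qed
qed simp

lemma reach_from_halted: "reach p c c' \<Longrightarrow> step p c = None \<Longrightarrow> c' = c"
  by (induction rule: converse_rtranclp_induct) (auto simp: mstep_def)

definition code_at :: "instr list \<Rightarrow> nat \<Rightarrow> instr list \<Rightarrow> bool" where
  "code_at p b c \<longleftrightarrow> take (length c) (drop b p) = c"

lemma code_at_append [simp]:
  "code_at p b (c1 @ c2) \<longleftrightarrow> code_at p b c1 \<and> code_at p (b + length c1) c2"
  unfolding code_at_def by (auto simp: take_add append_eq_conv_conj min_def add.commute)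

lemma code_at_Cons:
  "code_at p b (i # c) \<longleftrightarrow> b < length p \<and> p ! b = i \<and> code_at p (Suc b) c"
  by (cases "b < length p") (auto simp: code_at_def Cons_nth_drop_Suc[symmetric])

lemma code_at_self: "code_at p 0 p"
  by (simp add: code_at_def)

lemma mstep_Inc: "code_at p b [Inc r l] \<Longrightarrow> mstep p (b, R) (l, R(r := Suc (R r)))"
  by (simp add: code_at_Cons mstep_def)

lemma mstep_Dec_zero: "code_at p b [Dec r l1 l2] \<Longrightarrow> R r = 0 \<Longrightarrow> mstep p (b, R) (l2, R)"
  by (simp add: code_at_Cons mstep_def)

lemma mstep_Dec_pos:
  "code_at p b [Dec r l1 l2] \<Longrightarrow> R r \<noteq> 0 \<Longrightarrow> mstep p (b, R) (l1, R(r := R r - 1))"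
  by (simp add: code_at_Cons mstep_def)

lemma code_at_Cons_nonempty [simp]:
  "c \<noteq> [] \<Longrightarrow> code_at p b (i # c) \<longleftrightarrow> code_at p b [i] \<and> code_at p (Suc b) c"
  using code_at_append[of p b "[i]" c] by simp

definition clear_code :: "nat \<Rightarrow> nat \<Rightarrow> instr list" where
  "clear_code r b = [Dec r b (b + 1)]"

definition move_code :: "nat \<Rightarrow> nat \<Rightarrow> nat \<Rightarrow> instr list" where
  "move_code a d b = [Dec a (b + 1) (b + 2), Inc d b]"

definition move2_code :: "nat \<Rightarrow> nat \<Rightarrow> nat \<Rightarrow> nat \<Rightarrow> instr list" where
  "move2_code a d e b = [Dec a (b + 1) (b + 3), Inc d (b + 2), Inc e b]"

definition copy_code :: "nat \<Rightarrow> nat \<Rightarrow> nat \<Rightarrow> nat \<Rightarrow> instr list" where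
  "copy_code a d t b =
     clear_code d b @ clear_code t (b + 1) @ move2_code a d t (b + 2) @ move_code t a (b + 5)"

definition transfer_code :: "nat \<Rightarrow> nat \<Rightarrow> nat \<Rightarrow> instr list" where
  "transfer_code a d b = clear_code d b @ move_code a d (b + 1)"

lemma length_clear_code [simp]: "length (clear_code r b) = 1"
  and length_move_code [simp]: "length (move_code a d b) = 2"
  and length_move2_code [simp]: "length (move2_code a d e b) = 3"
  and length_copy_code [simp]: "length (copy_code a d t b) = 7"
  and length_transfer_code [simp]: "length (transfer_code a d b) = 3"
  by (simp_all add: clear_code_def move_code_def move2_code_def copy_code_def transfer_code_def)

lemma code_at_move_code:
  "code_at p b (move_code a d b) \<longleftrightarrow> code_at p b [Dec a (b + 1) (b + 2)] \<and> code_at p (b + 1) [Inc d b]"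
  by (simp add: move_code_def)

lemma code_at_move2_code:
  "code_at p b (move2_code a d e b) \<longleftrightarrow> code_at p b [Dec a (b + 1) (b + 3)]
     \<and> code_at p (b + 1) [Inc d (b + 2)] \<and> code_at p (b + 2) [Inc e b]"
  by (simp add: move2_code_def numeral_2_eq_2)

lemma code_at_copy_code:
  "code_at p b (copy_code a d t b) \<longleftrightarrow> code_at p b (clear_code d b)
     \<and> code_at p (b + 1) (clear_code t (b + 1)) \<and> code_at p (b + 2) (move2_code a d t (b + 2))
     \<and> code_at p (b + 5) (move_code t a (b + 5))"
proof -
  have "b + 1 + 1 = b + 2" "b + 2 + 3 = b + 5" by simp_all
  then show ?thesis
    unfolding copy_code_def code_at_append length_clear_code length_move2_code by (simp only:)
qed

lemma reach_clear: "code_at p b (clear_code r b) \<Longrightarrow> reach p (b, R) (b + 1, R(r := 0))"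
proof (induction "R r" arbitrary: R)
  case 0
  then have "mstep p (b, R) (b + 1, R)" by (simp add: clear_code_def mstep_Dec_zero)
  moreover from 0 have "R(r := 0) = R" by auto
  ultimately show ?case by (metis r_into_rtranclp)
next
  case (Suc k)
  then have "mstep p (b, R) (b, R(r := k))"
    using mstep_Dec_pos[of p b r b "b + 1" R] Suc.hyps(2)[symmetric] by (simp add: clear_code_def)
  moreover have "reach p (b, R(r := k)) (b + 1, R(r := 0))"
    using Suc.hyps(1)[of "R(r := k)"] Suc.prems by simp
  ultimately show ?case by (rule converse_rtranclp_into_rtranclp)
qed

lemma reach_move:
  assumes "a \<noteq> d" and "code_at p b (move_code a d b)"
  shows "reach p (b, R) (b + 2, R(a := 0, d := R d + R a))"
  using assms
proof (induction "R a" arbitrary: R)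
  case 0
  then have "mstep p (b, R) (b + 2, R)" by (intro mstep_Dec_zero) (auto simp: code_at_move_code)
  moreover from 0 have "R(a := 0, d := R d + R a) = R" by auto
  ultimately show ?case by (metis r_into_rtranclp)
next
  case (Suc k)
  let ?R = "R(a := k, d := Suc (R d))"
  from Suc.prems have dec: "code_at p b [Dec a (b + 1) (b + 2)]" and inc: "code_at p (b + 1) [Inc d b]"
    by (simp_all add: code_at_move_code)
  have "mstep p (b, R) (b + 1, R(a := k))"
    using mstep_Dec_pos[OF dec, of R] Suc.hyps(2)[symmetric] by simp
  moreover have "mstep p (b + 1, R(a := k)) (b, ?R)"
    using mstep_Inc[OF inc, of "R(a := k)"] Suc.prems(1) by simp
  moreover have "reach p (b, ?R) (b + 2, R(a := 0, d := R d + R a))"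
    using Suc.hyps(1)[of ?R] Suc.hyps(2)[symmetric] Suc.prems by (simp add: fun_upd_twist)
  ultimately show ?case by (meson converse_rtranclp_into_rtranclp)
qed

lemma reach_move2:
  assumes "a \<noteq> d" "a \<noteq> e" "d \<noteq> e" and "code_at p b (move2_code a d e b)"
  shows "reach p (b, R) (b + 3, R(a := 0, d := R d + R a, e := R e + R a))"
  using assms
proof (induction "R a" arbitrary: R)
  case 0
  then have "mstep p (b, R) (b + 3, R)" by (intro mstep_Dec_zero) (auto simp: code_at_move2_code)
  moreover from 0 have "R(a := 0, d := R d + R a, e := R e + R a) = R" by auto
  ultimately show ?case by (metis r_into_rtranclp)
next
  case (Suc k)
  let ?R = "R(a := k, d := Suc (R d), e := Suc (R e))"
  from Suc.prems have dec: "code_at p b [Dec a (b + 1) (b + 3)]"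
    and inc1: "code_at p (b + 1) [Inc d (b + 2)]" and inc2: "code_at p (b + 2) [Inc e b]"
    by (simp_all add: code_at_move2_code)
  have "mstep p (b, R) (b + 1, R(a := k))"
    using mstep_Dec_pos[OF dec, of R] Suc.hyps(2)[symmetric] by simp
  moreover have "mstep p (b + 1, R(a := k)) (b + 2, R(a := k, d := Suc (R d)))"
    using mstep_Inc[OF inc1, of "R(a := k)"] Suc.prems(1) by simp
  moreover have "mstep p (b + 2, R(a := k, d := Suc (R d))) (b, ?R)"
    using mstep_Inc[OF inc2, of "R(a := k, d := Suc (R d))"] Suc.prems(2,3) by simp
  moreover have "reach p (b, ?R) (b + 3, R(a := 0, d := R d + R a, e := R e + R a))"
    using Suc.hyps(1)[of ?R] Suc.hyps(2)[symmetric] Suc.prems by (simp add: fun_upd_twist)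
  ultimately show ?case by (meson converse_rtranclp_into_rtranclp)
qed

lemma reach_copy:
  assumes ne: "a \<noteq> d" "a \<noteq> t" "d \<noteq> t" and code: "code_at p b (copy_code a d t b)"
  shows "reach p (b, R) (b + 7, R(d := R a, t := 0))"
proof -
  define R1 where "R1 = R(d := 0, t := 0)"
  define R2 where "R2 = R1(a := 0, d := R1 d + R1 a, t := R1 t + R1 a)"
  from code have c1: "code_at p b (clear_code d b)" and c2: "code_at p (b + 1) (clear_code t (b + 1))"
    and c3: "code_at p (b + 2) (move2_code a d t (b + 2))" and c4: "code_at p (b + 5) (move_code t a (b + 5))"
    unfolding code_at_copy_code by blast+
  have "reach p (b, R) (b + 1, R(d := 0))"
    using reach_clear[OF c1] by simp
  also have "reach p (b + 1, R(d := 0)) (b + 2, R1)"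
    using reach_clear[OF c2] by (simp add: R1_def)
  also have "reach p (b + 2, R1) (b + 5, R2)"
    using reach_move2[OF ne c3, of R1] unfolding R2_def by (simp add: add.commute)
  also have "reach p (b + 5, R2) (b + 7, R(d := R a, t := 0))"
  proof -
    have "R2(t := 0, a := R2 a + R2 t) = R(d := R a, t := 0)"
      using ne by (auto simp: R1_def R2_def)
    then show ?thesis
      using reach_move[OF ne(2)[symmetric] c4, of R2] by (simp add: add.commute)
  qed
  finally show ?thesis .
qed

lemma reach_transfer:
  assumes "a \<noteq> d" and code: "code_at p b (transfer_code a d b)"
  shows "reach p (b, R) (b + 3, R(a := 0, d := R a))"
proof -
  from code have "code_at p b (clear_code d b)" "code_at p (b + 1) (move_code a d (b + 1))"
    by (simp_all add: transfer_code_def)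
  then have "reach p (b, R) (b + 1, R(d := 0))" "reach p (b + 1, R(d := 0)) (b + 1 + 2, R(a := 0, d := R a))"
    using reach_clear reach_move[OF \<open>a \<noteq> d\<close>, of p "b + 1" "R(d := 0)"] \<open>a \<noteq> d\<close>
    by (auto simp: fun_upd_twist)
  then show ?thesis by (simp add: numeral_3_eq_3)
qed

section \<open>Compiling partial recursive functions to register machines\<close>

definition prim_loop_code :: "nat \<Rightarrow> nat \<Rightarrow> instr list \<Rightarrow> instr list" where
  "prim_loop_code s l cg = [Dec s (l + 1) (l + 1 + length cg + 4)] @ cg
     @ transfer_code (s + 3) (s + 2) (l + 1 + length cg) @ [Inc (s + 1) l]"

lemma length_prim_loop_code [simp]: "length (prim_loop_code s l cg) = length cg + 5"
  by (simp add: prim_loop_code_def)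

text \<open>\<open>compile f ins out s b\<close> is code placed at address \<open>b\<close> that reads the arguments of \<open>f\<close>
  from the registers \<open>ins\<close>, writes the result to \<open>out\<close> and uses the registers from \<open>s\<close>
  upwards as scratch space.  For \<open>Prim f g\<close> the register \<open>s\<close> counts the remaining iterations,
  \<open>s + 1\<close> is the recursion index, \<open>s + 2\<close> the accumulator and \<open>s + 3\<close> receives its next value.\<close>

primrec compile :: "recf \<Rightarrow> nat list \<Rightarrow> nat \<Rightarrow> nat \<Rightarrow> nat \<Rightarrow> instr list"
  and compile_list :: "recf list \<Rightarrow> nat list \<Rightarrow> nat \<Rightarrow> nat \<Rightarrow> nat \<Rightarrow> instr list" where
  "compile Z ins out s b = clear_code out b"
| "compile S ins out s b = (case ins of [] \<Rightarrow> [] | a # _ \<Rightarrow> copy_code a out s b @ [Inc out (b + 8)])"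
| "compile (Proj i) ins out s b = (if i < length ins then copy_code (ins ! i) out s b else [])"
| "compile (Comp f gs) ins out s b =
    (let cg = compile_list gs ins s (s + length gs) b
     in cg @ compile f [s..<s + length gs] out (s + length gs) (b + length cg))"
| "compile (Prim f g) ins out s b = (case ins of [] \<Rightarrow> [] | n # xs \<Rightarrow>
    (let cf = compile f xs (s + 2) (s + 5) (b + 8);
         l = b + 8 + length cf;
         cl = prim_loop_code s l (compile g ((s + 1) # (s + 2) # xs) (s + 3) (s + 5) (l + 1))
     in copy_code n s (s + 4) b @ clear_code (s + 1) (b + 7) @ cf @ cl
        @ transfer_code (s + 2) out (l + length cl)))"
| "compile (Mu f) ins out s b =
    (let cf = compile f (s # ins) (s + 1) (s + 2) (b + 1);
         l = b + 1 + length cf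
     in clear_code s b @ cf @ [Dec (s + 1) (l + 1) (l + 2), Inc s (b + 1)]
        @ transfer_code s out (l + 2))"
| "compile_list [] ins ob s b = []"
| "compile_list (g # gs) ins ob s b =
    (let c = compile g ins ob s b in c @ compile_list gs ins (Suc ob) s (b + length c))"

text \<open>Correctness of \<open>compile\<close> is stated for every placement of the code and of the registers,
  so that it can be proved by induction on \<open>f\<close>.\<close>

definition computes :: "recf \<Rightarrow> nat list \<Rightarrow> nat \<Rightarrow> bool" where
  "computes f xs y \<longleftrightarrow> (\<forall>ins out s b p R. map R ins = xs \<longrightarrow> (\<forall>r\<in>set ins. r < s) \<longrightarrow> out < s
     \<longrightarrow> out \<notin> set ins \<longrightarrow> code_at p b (compile f ins out s b) \<longrightarrow>
     (\<exists>R'. reach p (b, R) (b + length (compile f ins out s b), R') \<and> R' out = y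
       \<and> (\<forall>r<s. r \<noteq> out \<longrightarrow> R' r = R r)))"

lemma computesI:
  assumes "\<And>ins out s b p R. map R ins = xs \<Longrightarrow> \<forall>r\<in>set ins. r < s \<Longrightarrow> out < s
     \<Longrightarrow> out \<notin> set ins \<Longrightarrow> code_at p b (compile f ins out s b) \<Longrightarrow>
     \<exists>R'. reach p (b, R) (b + length (compile f ins out s b), R') \<and> R' out = y
       \<and> (\<forall>r<s. r \<noteq> out \<longrightarrow> R' r = R r)"
  shows "computes f xs y"
  using assms unfolding computes_def by blast

lemma computesD:
  assumes "computes f xs y" "map R ins = xs" "\<forall>r\<in>set ins. r < s" "out < s" "out \<notin> set ins"
    "code_at p b (compile f ins out s b)"
  shows "\<exists>R'. reach p (b, R) (b + length (compile f ins out s b), R') \<and> R' out = y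
       \<and> (\<forall>r<s. r \<noteq> out \<longrightarrow> R' r = R r)"
  using assms unfolding computes_def by blast

lemma computes_Z: "computes Z xs 0"
proof (rule computesI)
  fix ins out s b p R
  assume "code_at p b (compile Z ins out s b)"
  then have "code_at p b (clear_code out b)" by simp
  then have "reach p (b, R) (b + 1, R(out := 0))" by (rule reach_clear)
  then show "\<exists>R'. reach p (b, R) (b + length (compile Z ins out s b), R') \<and> R' out = 0
       \<and> (\<forall>r<s. r \<noteq> out \<longrightarrow> R' r = R r)"
    by (intro exI[of _ "R(out := 0)"]) simp
qed

lemma computes_S: "computes S (x # xs) (Suc x)"
proof (rule computesI)
  fix ins out s b p R
  assume R: "map R ins = x # xs" and ins: "\<forall>r\<in>set ins. r < s" and out: "out < s" "out \<notin> set ins"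
    and code: "code_at p b (compile S ins out s b)"
  from R obtain a ins' where ins_eq: "ins = a # ins'" and "R a = x" by auto
  with ins out have ne: "a \<noteq> out" "a \<noteq> s" "out \<noteq> s" by auto
  define R1 where "R1 = R(out := x, s := 0)"
  from code have "code_at p b (copy_code a out s b)" "code_at p (b + 7) [Inc out (b + 8)]"
    by (simp_all add: ins_eq)
  then have "reach p (b, R) (b + 7, R1)" "mstep p (b + 7, R1) (b + 8, R1(out := Suc x))"
    using reach_copy[OF ne, of p b R] mstep_Inc[of p "b + 7" out "b + 8" R1] ne \<open>R a = x\<close>
    by (simp_all add: R1_def)
  then have "reach p (b, R) (b + 8, R1(out := Suc x))" by simp
  then show "\<exists>R'. reach p (b, R) (b + length (compile S ins out s b), R') \<and> R' out = Suc x
       \<and> (\<forall>r<s. r \<noteq> out \<longrightarrow> R' r = R r)"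
    using ne by (intro exI[of _ "R1(out := Suc x)"]) (simp add: ins_eq R1_def)
qed

lemma computes_Proj: "i < length xs \<Longrightarrow> computes (Proj i) xs (xs ! i)"
proof (rule computesI)
  fix ins out s b p R
  assume i: "i < length xs" and R: "map R ins = xs" and ins: "\<forall>r\<in>set ins. r < s"
    and out: "out < s" "out \<notin> set ins" and code: "code_at p b (compile (Proj i) ins out s b)"
  from R i have i': "i < length ins" and "R (ins ! i) = xs ! i" by auto
  moreover from i' ins out have ne: "ins ! i \<noteq> out" "ins ! i \<noteq> s" "out \<noteq> s"
    using nth_mem by fastforce+
  moreover from code i' have "code_at p b (copy_code (ins ! i) out s b)" by simp
  then have "reach p (b, R) (b + 7, R(out := R (ins ! i), s := 0))" by (rule reach_copy[OF ne])
  ultimately show "\<exists>R'. reach p (b, R) (b + length (compile (Proj i) ins out s b), R')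
      \<and> R' out = xs ! i \<and> (\<forall>r<s. r \<noteq> out \<longrightarrow> R' r = R r)"
    by (intro exI[of _ "R(out := R (ins ! i), s := 0)"]) simp
qed

lemma computes_list:
  assumes "list_all2 (\<lambda>g y. computes g xs y) gs ys" and "map R ins = xs" and "\<forall>r\<in>set ins. r < ob"
    and "ob + length gs \<le> s" and "code_at p b (compile_list gs ins ob s b)"
  shows "\<exists>R'. reach p (b, R) (b + length (compile_list gs ins ob s b), R')
    \<and> map R' [ob..<ob + length gs] = ys \<and> (\<forall>r<s. (r < ob \<or> ob + length gs \<le> r) \<longrightarrow> R' r = R r)"
  using assms
proof (induction gs arbitrary: ys ob b R)
  case Nil
  then show ?case by auto
next
  case (Cons g gs)
  from Cons.prems(1) obtain y ys' where ys: "ys = y # ys'" and g: "computes g xs y"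
    and gs: "list_all2 (\<lambda>g y. computes g xs y) gs ys'"
    by (auto simp: list_all2_Cons1)
  define c where "c = compile g ins ob s b"
  from Cons.prems(5) have code: "code_at p b c" "code_at p (b + length c) (compile_list gs ins (Suc ob) s (b + length c))"
    by (simp_all add: c_def Let_def)
  from Cons.prems(3,4) have ob: "ob < s" "ob \<notin> set ins" "\<forall>r\<in>set ins. r < s" by auto
  obtain R1 where R1: "reach p (b, R) (b + length c, R1)" "R1 ob = y" "\<forall>r<s. r \<noteq> ob \<longrightarrow> R1 r = R r"
    using computesD[OF g Cons.prems(2) ob(3) ob(1,2) code(1)[unfolded c_def]] c_def by blast
  have "map R1 ins = xs"
  proof -
    have "R1 r = R r" if "r \<in> set ins" for r
      using that Cons.prems(3) ob(3) R1(3) by (metis less_not_refl)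
    with Cons.prems(2) show ?thesis by auto
  qed
  moreover from Cons.prems(3,4) have "\<forall>r\<in>set ins. r < Suc ob" "Suc ob + length gs \<le> s" by auto
  ultimately obtain R2 where R2: "reach p (b + length c, R1) (b + length c + length (compile_list gs ins (Suc ob) s (b + length c)), R2)"
    "map R2 [Suc ob..<Suc ob + length gs] = ys'" "\<forall>r<s. (r < Suc ob \<or> Suc ob + length gs \<le> r) \<longrightarrow> R2 r = R1 r"
    using Cons.IH[OF gs _ _ _ code(2)] by blast
  have "reach p (b, R) (b + length (compile_list (g # gs) ins ob s b), R2)"
    using R1(1) R2(1) by (simp add: c_def Let_def add.assoc)
  moreover have "[ob..<ob + length (g # gs)] = ob # [Suc ob..<Suc ob + length gs]"
    by (simp del: upt_Suc add: upt_conv_Cons)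
  then have "map R2 [ob..<ob + length (g # gs)] = ys"
    using R1(2) R2(2,3) ys ob(1) by simp
  moreover have "\<forall>r<s. (r < ob \<or> ob + length (g # gs) \<le> r) \<longrightarrow> R2 r = R r"
    using R1(3) R2(3) by auto
  ultimately show ?case by blast
qed

lemma computes_Comp:
  assumes gs: "list_all2 (\<lambda>g y. computes g xs y) gs ys" and f: "computes f ys z"
  shows "computes (Comp f gs) xs z"
proof (rule computesI)
  fix ins out s b p R
  assume R: "map R ins = xs" and ins: "\<forall>r\<in>set ins. r < s" and out: "out < s" "out \<notin> set ins"
    and code: "code_at p b (compile (Comp f gs) ins out s b)"
  define m where "m = length gs"
  define cg where "cg = compile_list gs ins s (s + m) b"
  define cf where "cf = compile f [s..<s + m] out (s + m) (b + length cg)"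
  have code_eq: "compile (Comp f gs) ins out s b = cg @ cf" by (simp add: cg_def cf_def m_def Let_def)
  from code have code_g: "code_at p b cg" and code_f: "code_at p (b + length cg) cf"
    unfolding code_eq by simp_all
  obtain R1 where R1: "reach p (b, R) (b + length cg, R1)" "map R1 [s..<s + m] = ys"
    "\<forall>r<s + m. (r < s \<or> s + m \<le> r) \<longrightarrow> R1 r = R r"
    using computes_list[OF gs R ins _ code_g[unfolded cg_def]] by (auto simp: cg_def m_def)
  obtain R2 where R2: "reach p (b + length cg, R1) (b + length cg + length cf, R2)" "R2 out = z"
    "\<forall>r<s + m. r \<noteq> out \<longrightarrow> R2 r = R1 r"
    using computesD[OF f R1(2) _ _ _ code_f[unfolded cf_def]] out by (auto simp: cf_def)
  have "reach p (b, R) (b + length (cg @ cf), R2)"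
    using R1(1) R2(1) by (simp add: add.assoc)
  moreover have "\<forall>r<s. r \<noteq> out \<longrightarrow> R2 r = R r" using R1(3) R2(3) by auto
  ultimately show "\<exists>R'. reach p (b, R) (b + length (compile (Comp f gs) ins out s b), R')
      \<and> R' out = z \<and> (\<forall>r<s. r \<noteq> out \<longrightarrow> R' r = R r)"
    unfolding code_eq using R2(2) by blast
qed

lemma map_agree_below: "\<forall>r\<in>set xs. r < s \<Longrightarrow> \<forall>r<s. R' r = R r \<Longrightarrow> map R' xs = map R xs"
  by auto

lemma eval_Prim_defined_below:
  "eval (Prim f g) (n # xs) z \<Longrightarrow> j \<le> n \<Longrightarrow> \<exists>a. eval (Prim f g) (j # xs) a"
proof (induction n arbitrary: z)
  case (Suc n)
  then show ?case by (cases "j = Suc n") (auto elim: eval_PrimE simp: le_Suc_eq)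
qed auto

lemma eval_Prim_SucD:
  "eval (Prim f g) (Suc j # xs) z \<Longrightarrow> eval (Prim f g) (j # xs) a \<Longrightarrow> eval g (j # a # xs) z"
  by (erule eval_PrimE) (auto dest: eval_deterministic)

lemma reach_prim_iteration:
  fixes g :: recf and s l :: nat and xr :: "nat list"
  defines "cg \<equiv> compile g ((s + 1) # (s + 2) # xr) (s + 3) (s + 5) (l + 1)"
  assumes code: "code_at p l (prim_loop_code s l cg)"
    and g: "computes g (j # a # xs) a'" and xr: "\<forall>r\<in>set xr. r < s"
    and R: "map R xr = xs" "R s = Suc k" "R (s + 1) = j" "R (s + 2) = a"
  shows "\<exists>R'. reach p (l, R) (l, R') \<and> R' s = k \<and> R' (s + 1) = Suc j \<and> R' (s + 2) = a'
    \<and> (\<forall>r<s. R' r = R r)"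
proof -
  define q where "q = l + 1 + length cg"
  from code have dec: "code_at p l [Dec s (l + 1) (q + 4)]" and c_g: "code_at p (l + 1) cg"
    and transfer: "code_at p q (transfer_code (s + 3) (s + 2) q)" and inc: "code_at p (q + 3) [Inc (s + 1) l]"
    by (simp_all add: prim_loop_code_def q_def numeral_eq_Suc)
  define R1 where "R1 = R(s := k)"
  have args: "map R1 ((s + 1) # (s + 2) # xr) = j # a # xs"
    "\<forall>r\<in>set ((s + 1) # (s + 2) # xr). r < s + 5" "s + 3 < s + 5"
    "s + 3 \<notin> set ((s + 1) # (s + 2) # xr)"
    using R xr by (auto simp: R1_def)
  from computesD[OF g args c_g[unfolded cg_def]]
  obtain R2 where R2: "reach p (l + 1, R1) (q, R2)" "R2 (s + 3) = a'"
      "\<forall>r<s + 5. r \<noteq> s + 3 \<longrightarrow> R2 r = R1 r"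
    unfolding cg_def[symmetric] q_def by blast
  define R3 where "R3 = R2(s + 3 := 0, s + 2 := R2 (s + 3))"
  define R4 where "R4 = R3(s + 1 := Suc (R3 (s + 1)))"
  have "mstep p (l, R) (l + 1, R1)"
    using mstep_Dec_pos[OF dec, of R] R(2) by (simp add: R1_def)
  also note R2(1)
  also have "reach p (q, R2) (q + 3, R3)" unfolding R3_def by (rule reach_transfer[OF _ transfer]) simp
  also have "mstep p (q + 3, R3) (l, R4)" using mstep_Inc[OF inc] by (simp add: R4_def)
  finally have "reach p (l, R) (l, R4)" .
  moreover have "R4 s = k" "R4 (s + 1) = Suc j" "R4 (s + 2) = a'" "\<forall>r<s. R4 r = R r"
    using R2(2,3) R(3) by (simp_all add: R4_def R3_def R1_def)
  ultimately show ?thesis by blast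
qed

lemma reach_prim_loop:
  fixes g :: recf and s l :: nat and xr :: "nat list"
  defines "cg \<equiv> compile g ((s + 1) # (s + 2) # xr) (s + 3) (s + 5) (l + 1)"
  assumes g: "\<And>ys y. eval g ys y \<Longrightarrow> computes g ys y"
    and z: "eval (Prim f g) (n # xs) z"
    and xr: "\<forall>r\<in>set xr. r < s"
    and code: "code_at p l (prim_loop_code s l cg)"
    and inv: "map R xr = xs" "eval (Prim f g) (j # xs) a" "j + R s = n" "R (s + 1) = j" "R (s + 2) = a"
  shows "\<exists>R'. reach p (l, R) (l + length cg + 5, R') \<and> R' (s + 2) = z \<and> (\<forall>r<s. R' r = R r)"
  using inv
proof (induction "R s" arbitrary: R j a)
  case 0
  have "l + 1 + length cg + 4 = l + length cg + 5" by simp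
  with code have "code_at p l [Dec s (l + 1) (l + length cg + 5)]"
    unfolding prim_loop_code_def code_at_append by metis
  with 0 have "mstep p (l, R) (l + length cg + 5, R)" by (simp add: mstep_Dec_zero)
  moreover from 0 z have "a = z" by (auto dest: eval_deterministic)
  ultimately show ?case using 0 by (intro exI[of _ R]) auto
next
  case (Suc k)
  obtain a' where a': "eval (Prim f g) (Suc j # xs) a'"
    using eval_Prim_defined_below[OF z, of "Suc j"] Suc by auto
  then have "eval g (j # a # xs) a'" using Suc.prems(2) by (rule eval_Prim_SucD)
  from reach_prim_iteration[OF code[unfolded cg_def] g[OF this] xr Suc.prems(1)
      Suc.hyps(2)[symmetric] Suc.prems(4,5)]
  obtain R1 where R1: "reach p (l, R) (l, R1)" "R1 s = k" "R1 (s + 1) = Suc j" "R1 (s + 2) = a'"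
      "\<forall>r<s. R1 r = R r"
    by blast
  moreover have "map R1 xr = xs" using Suc.prems(1) map_agree_below[OF xr R1(5)] by simp
  ultimately obtain R' where "reach p (l, R1) (l + length cg + 5, R')" "R' (s + 2) = z"
      "\<forall>r<s. R' r = R1 r"
    using Suc.hyps(1)[of R1 "Suc j" a'] a' Suc.hyps(2) Suc.prems(3) by auto
  with R1 show ?case by (auto intro: rtranclp_trans)
qed

lemma reach_prim_init:
  fixes f :: recf and s b :: nat and xr :: "nat list"
  defines "cf \<equiv> compile f xr (s + 2) (s + 5) (b + 8)"
  assumes code: "code_at p b (copy_code nr s (s + 4) b @ clear_code (s + 1) (b + 7) @ cf)"
    and f: "computes f xs a" and R: "map R xr = xs" "R nr = n"
    and regs: "nr < s" "\<forall>r\<in>set xr. r < s"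
  shows "\<exists>R'. reach p (b, R) (b + 8 + length cf, R') \<and> R' s = n \<and> R' (s + 1) = 0
    \<and> R' (s + 2) = a \<and> (\<forall>r<s. R' r = R r)"
proof -
  have eight: "b + 7 + 1 = b + 8" by simp
  with code have c_copy: "code_at p b (copy_code nr s (s + 4) b)"
    and c_clear: "code_at p (b + 7) (clear_code (s + 1) (b + 7))" and c_f: "code_at p (b + 8) cf"
    unfolding code_at_append length_copy_code length_clear_code by metis+
  define R1 where "R1 = R(s := n, s + 4 := 0, s + 1 := 0)"
  have "reach p (b, R) (b + 7, R(s := n, s + 4 := 0))"
    using reach_copy[OF _ _ _ c_copy, of R] regs R(2) by simp
  also have "reach p (b + 7, R(s := n, s + 4 := 0)) (b + 8, R1)"
    using reach_clear[OF c_clear, of "R(s := n, s + 4 := 0)"] unfolding eight R1_def .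
  finally have "reach p (b, R) (b + 8, R1)" .
  moreover have "map R1 xr = xs" using R map_agree_below[OF regs(2), of R1 R] by (simp add: R1_def)
  moreover have "\<forall>r\<in>set xr. r < s + 5" "s + 2 < s + 5" "s + 2 \<notin> set xr" using regs by auto
  ultimately obtain R2 where "reach p (b, R) (b + 8 + length cf, R2)" "R2 (s + 2) = a"
      "\<forall>r<s + 5. r \<noteq> s + 2 \<longrightarrow> R2 r = R1 r"
    using computesD[OF f _ _ _ _ c_f[unfolded cf_def]] unfolding cf_def[symmetric]
    by (metis rtranclp_trans)
  then show ?thesis by (intro exI[of _ R2]) (simp add: R1_def)
qed

lemma computes_Prim:
  assumes f: "\<And>ys y. eval f ys y \<Longrightarrow> computes f ys y"
    and g: "\<And>ys y. eval g ys y \<Longrightarrow> computes g ys y"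
    and z: "eval (Prim f g) xs z"
  shows "computes (Prim f g) xs z"
proof (rule computesI)
  fix ins out s b p R
  assume R: "map R ins = xs" and ins: "\<forall>r\<in>set ins. r < s" and out: "out < s" "out \<notin> set ins"
    and code: "code_at p b (compile (Prim f g) ins out s b)"
  from z obtain n xs' where xs: "xs = n # xs'" by (blast elim: eval_PrimE)
  with R obtain nr xr where ins_eq: "ins = nr # xr" and Rn: "R nr = n" and Rxr: "map R xr = xs'"
    by auto
  with ins have regs: "nr < s" "\<forall>r\<in>set xr. r < s" by auto
  define cf where "cf = compile f xr (s + 2) (s + 5) (b + 8)"
  define init where "init = copy_code nr s (s + 4) b @ clear_code (s + 1) (b + 7) @ cf"
  define l where "l = b + 8 + length cf"
  define cg where "cg = compile g ((s + 1) # (s + 2) # xr) (s + 3) (s + 5) (l + 1)"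
  define e where "e = l + length cg + 5"
  have code_eq: "compile (Prim f g) ins out s b = init @ prim_loop_code s l cg @ transfer_code (s + 2) out e"
    by (simp add: ins_eq init_def cf_def l_def cg_def e_def Let_def)
  have offsets: "b + length init = l" "l + length (prim_loop_code s l cg) = e"
    by (simp_all add: init_def l_def e_def)
  from code have c_init: "code_at p b init" and c_loop: "code_at p l (prim_loop_code s l cg)"
    and c_out: "code_at p e (transfer_code (s + 2) out e)"
    unfolding code_eq code_at_append offsets by blast+
  obtain a0 where a0: "eval (Prim f g) (0 # xs') a0"
    using eval_Prim_defined_below[OF z[unfolded xs], of 0] by blast
  then have "computes f xs' a0" by (blast intro: f elim: eval_PrimE)
  from reach_prim_init[OF c_init[unfolded init_def cf_def] this Rxr Rn regs]
  obtain R1 where R1: "reach p (b, R) (l, R1)" "R1 s = n" "R1 (s + 1) = 0" "R1 (s + 2) = a0"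
      "\<forall>r<s. R1 r = R r"
    unfolding cf_def[symmetric] l_def[symmetric] by blast
  moreover have "map R1 xr = xs'" using Rxr map_agree_below[OF regs(2) R1(5)] by simp
  ultimately obtain R2 where R2: "reach p (l, R1) (e, R2)" "R2 (s + 2) = z" "\<forall>r<s. R2 r = R1 r"
    using reach_prim_loop[OF g z[unfolded xs] regs(2) c_loop[unfolded cg_def], of R1 0 a0] a0
    unfolding cg_def[symmetric] e_def by auto
  define R3 where "R3 = R2(s + 2 := 0, out := R2 (s + 2))"
  have "reach p (e, R2) (e + 3, R3)"
    unfolding R3_def using out by (intro reach_transfer[OF _ c_out]) auto
  with R1(1) R2(1) have "reach p (b, R) (b + length (compile (Prim f g) ins out s b), R3)"
    unfolding code_eq offsets[symmetric] by (simp add: add.assoc)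
  moreover have "R3 out = z" "\<forall>r<s. r \<noteq> out \<longrightarrow> R3 r = R r"
    using R1(5) R2(2,3) out by (simp_all add: R3_def)
  ultimately show "\<exists>R'. reach p (b, R) (b + length (compile (Prim f g) ins out s b), R')
      \<and> R' out = z \<and> (\<forall>r<s. r \<noteq> out \<longrightarrow> R' r = R r)"
    by blast
qed

lemma reach_mu_test:
  fixes f :: recf and s b :: nat and ins :: "nat list"
  defines "cf \<equiv> compile f (s # ins) (s + 1) (s + 2) (b + 1)"
  assumes code: "code_at p (b + 1) cf" and f: "computes f (R s # xs) y"
    and R: "map R ins = xs" and ins: "\<forall>r\<in>set ins. r < s"
  shows "\<exists>R'. reach p (b + 1, R) (b + 1 + length cf, R') \<and> R' (s + 1) = y \<and> (\<forall>r\<le>s. R' r = R r)"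
proof -
  have "map R (s # ins) = R s # xs" "\<forall>r\<in>set (s # ins). r < s + 2" "s + 1 < s + 2"
    "s + 1 \<notin> set (s # ins)"
    using R ins by auto
  from computesD[OF f this code[unfolded cf_def]] show ?thesis
    unfolding cf_def[symmetric] by auto
qed

lemma reach_mu_loop:
  fixes f :: recf and s b :: nat and ins :: "nat list"
  defines "cf \<equiv> compile f (s # ins) (s + 1) (s + 2) (b + 1)"
  assumes f: "\<And>ys y. eval f ys y \<Longrightarrow> computes f ys y"
    and n: "eval (Mu f) xs n"
    and ins: "\<forall>r\<in>set ins. r < s"
    and code: "code_at p (b + 1) (cf @ [Dec (s + 1) (b + 1 + length cf + 1) (b + 1 + length cf + 2),
      Inc s (b + 1)])"
    and inv: "map R ins = xs" "R s \<le> n"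
  shows "\<exists>R'. reach p (b + 1, R) (b + 1 + length cf + 2, R') \<and> R' s = n \<and> (\<forall>r<s. R' r = R r)"
  using inv
proof (induction "n - R s" arbitrary: R)
  define q where "q = b + 1 + length cf"
  from code have c_f: "code_at p (b + 1) cf" and dec: "code_at p q [Dec (s + 1) (q + 1) (q + 2)]"
    and inc: "code_at p (q + 1) [Inc s (b + 1)]"
    by (simp_all add: q_def)
  from n have zero: "eval f (n # xs) 0" and pos: "\<forall>m<n. \<exists>k. eval f (m # xs) (Suc k)"
    by (blast elim: eval_MuE)+
  note test = reach_mu_test[OF c_f[unfolded cf_def] f, folded cf_def q_def, OF _ _ ins]
  {
    case 0
    then have "R s = n" "map R ins = xs" by simp_all
    with zero have "eval f (R s # xs) 0" by simp
    from test[OF this \<open>map R ins = xs\<close>] obtain R1 where R1: "reach p (b + 1, R) (q, R1)" "R1 (s + 1) = 0"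
        "\<forall>r\<le>s. R1 r = R r"
      by blast
    then have "reach p (b + 1, R) (q + 2, R1)"
      using mstep_Dec_zero[OF dec] by (meson rtranclp.rtrancl_into_rtrancl)
    with R1(3) \<open>R s = n\<close> show ?case unfolding q_def by auto
  next
    case (Suc c)
    then obtain k where "eval f (R s # xs) (Suc k)" using pos by (metis diff_is_0_eq' nat.distinct(1) not_le)
    from test[OF this Suc.prems(1)] obtain R1 where R1: "reach p (b + 1, R) (q, R1)"
        "R1 (s + 1) = Suc k" "\<forall>r\<le>s. R1 r = R r"
      by blast
    define R2 where "R2 = R1(s + 1 := k, s := Suc (R1 s))"
    have "mstep p (q, R1) (q + 1, R1(s + 1 := k))" using mstep_Dec_pos[OF dec, of R1] R1(2) by simp
    moreover have "mstep p (q + 1, R1(s + 1 := k)) (b + 1, R2)"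
      using mstep_Inc[OF inc, of "R1(s + 1 := k)"] by (simp add: R2_def)
    moreover have R2: "n - R2 s = c" "R2 s \<le> n" "\<forall>r<s. R2 r = R r"
      using Suc R1(3) by (auto simp: R2_def)
    moreover have "map R2 ins = xs"
      using Suc.prems(1) map_agree_below[OF ins R2(3)] by simp
    ultimately show ?case
      using R1(1) Suc.hyps(1)[of R2] unfolding q_def
      by (metis (no_types, lifting) converse_rtranclp_into_rtranclp rtranclp_trans)
  }
qed

lemma computes_Mu:
  assumes f: "\<And>ys y. eval f ys y \<Longrightarrow> computes f ys y" and n: "eval (Mu f) xs n"
  shows "computes (Mu f) xs n"
proof (rule computesI)
  fix ins out s b p R
  assume R: "map R ins = xs" and ins: "\<forall>r\<in>set ins. r < s" and out: "out < s" "out \<notin> set ins"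
    and code: "code_at p b (compile (Mu f) ins out s b)"
  define cf where "cf = compile f (s # ins) (s + 1) (s + 2) (b + 1)"
  define l where "l = b + 1 + length cf"
  define loop where "loop = cf @ [Dec (s + 1) (l + 1) (l + 2), Inc s (b + 1)]"
  have code_eq: "compile (Mu f) ins out s b
      = clear_code s b @ loop @ transfer_code s out (l + 2)"
    by (simp add: cf_def l_def loop_def Let_def)
  have offset: "b + 1 + length loop = l + 2" by (simp add: loop_def l_def)
  from code have c_clear: "code_at p b (clear_code s b)" and c_loop: "code_at p (b + 1) loop"
    and c_out: "code_at p (l + 2) (transfer_code s out (l + 2))"
    unfolding code_eq code_at_append length_clear_code offset by blast+
  define R1 where "R1 = R(s := 0)"
  have "map R1 ins = xs" using R map_agree_below[OF ins, of R1 R] by (simp add: R1_def)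
  moreover have "R1 s \<le> n" by (simp add: R1_def)
  ultimately obtain R2 where R2: "reach p (b + 1, R1) (l + 2, R2)" "R2 s = n" "\<forall>r<s. R2 r = R1 r"
    using reach_mu_loop[OF f n ins c_loop[unfolded loop_def l_def cf_def]]
    unfolding cf_def[symmetric] l_def[symmetric] by blast
  define R3 where "R3 = R2(s := 0, out := R2 s)"
  have "reach p (b, R) (b + 1, R1)" unfolding R1_def by (rule reach_clear[OF c_clear])
  also have "reach p (b + 1, R1) (l + 2, R2)" by (fact R2(1))
  also have "reach p (l + 2, R2) (l + 2 + 3, R3)"
    unfolding R3_def using out by (intro reach_transfer[OF _ c_out]) auto
  finally have "reach p (b, R) (l + 2 + 3, R3)" .
  moreover have "b + length (compile (Mu f) ins out s b) = l + 2 + 3"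
    unfolding code_eq by (simp add: loop_def l_def)
  moreover have "R3 out = n" "\<forall>r<s. r \<noteq> out \<longrightarrow> R3 r = R r"
    using R2(2,3) out by (simp_all add: R3_def R1_def)
  ultimately show "\<exists>R'. reach p (b, R) (b + length (compile (Mu f) ins out s b), R')
      \<and> R' out = n \<and> (\<forall>r<s. r \<noteq> out \<longrightarrow> R' r = R r)"
    by metis
qed

theorem compile_correct: "eval f xs y \<Longrightarrow> computes f xs y"
proof (induction f arbitrary: xs y)
  case (Comp f gs)
  from Comp.prems obtain ys where gs: "list_all2 (\<lambda>g y. eval g xs y) gs ys" and "eval f ys y"
    by (blast elim: eval_CompE)
  from gs Comp.IH(2) have "list_all2 (\<lambda>g y. computes g xs y) gs ys"
    by (auto simp: list_all2_conv_all_nth)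
  with Comp.IH(1)[OF \<open>eval f ys y\<close>] show ?case by (blast intro: computes_Comp)
qed (auto elim: eval_ZE eval_SE eval_ProjE intro: computes_Z computes_S computes_Proj
    computes_Prim computes_Mu)

section \<open>Runs of register machines as words\<close>

definition cnt :: "(nat \<Rightarrow> bool) \<Rightarrow> nat list \<Rightarrow> nat" where
  "cnt P u = length (filter P u)"

lemma cnt_Nil [simp]: "cnt P [] = 0"
  and cnt_append [simp]: "cnt P (u @ v) = cnt P u + cnt P v"
  and cnt_singleton [simp]: "cnt P [a] = (if P a then 1 else 0)"
  and cnt_replicate [simp]: "cnt P (replicate n a) = (if P a then n else 0)"
  by (simp_all add: cnt_def)

text \<open>Symbol \<open>0\<close> loads the input into register \<open>0\<close>.  The instruction at label \<open>l\<close> has the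
  symbols \<open>2 * l + 1\<close> (increment, or successful decrement) and \<open>2 * l + 2\<close> (the zero branch
  of a decrement).\<close>

definition label_of :: "nat \<Rightarrow> nat" where
  "label_of a = (a - 1) div 2"

definition zero_branch :: "nat \<Rightarrow> bool" where
  "zero_branch a \<longleftrightarrow> (a - 1) mod 2 = 1"

lemma label_of_code [simp]: "label_of (Suc (2 * l)) = l" "label_of (Suc (Suc (2 * l))) = l"
  and zero_branch_code [simp]: "\<not> zero_branch (Suc (2 * l))" "zero_branch (Suc (Suc (2 * l)))"
  by (simp_all add: label_of_def zero_branch_def)

definition valid_sym :: "instr list \<Rightarrow> nat \<Rightarrow> bool" where
  "valid_sym p a \<longleftrightarrow> a = 0 \<or> (label_of a < length p \<and> (zero_branch a \<longrightarrow> is_Dec (p ! label_of a)))"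

definition target :: "instr list \<Rightarrow> nat \<Rightarrow> nat" where
  "target p a = (if a = 0 then 0 else
     case p ! label_of a of Inc r l \<Rightarrow> l | Dec r l1 l2 \<Rightarrow> if zero_branch a then l2 else l1)"

definition incs :: "instr list \<Rightarrow> nat \<Rightarrow> nat \<Rightarrow> bool" where
  "incs p r a \<longleftrightarrow> (if a = 0 then r = 0 else case p ! label_of a of Inc r' l \<Rightarrow> r' = r | Dec r' l1 l2 \<Rightarrow> False)"

definition decs :: "instr list \<Rightarrow> nat \<Rightarrow> nat \<Rightarrow> bool" where
  "decs p r a \<longleftrightarrow> a \<noteq> 0 \<and> \<not> zero_branch a
     \<and> (case p ! label_of a of Inc r' l \<Rightarrow> False | Dec r' l1 l2 \<Rightarrow> r' = r)"

definition tests_zero :: "instr list \<Rightarrow> nat \<Rightarrow> nat \<Rightarrow> bool" where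
  "tests_zero p r a \<longleftrightarrow> a \<noteq> 0 \<and> zero_branch a
     \<and> (case p ! label_of a of Inc r' l \<Rightarrow> False | Dec r' l1 l2 \<Rightarrow> r' = r)"

lemma valid_sym_0 [simp]: "valid_sym p 0" and target_0 [simp]: "target p 0 = 0"
  by (simp_all add: valid_sym_def target_def)

lemma valid_sym_bound: "valid_sym p a \<Longrightarrow> a < 2 * length p + 1"
  unfolding valid_sym_def label_of_def by auto

lemma tests_zero_not_incs_decs: "tests_zero p r a \<Longrightarrow> \<not> incs p r' a \<and> \<not> decs p r' a"
  by (cases "p ! label_of a") (auto simp: tests_zero_def incs_def decs_def)

definition sym_transition :: "instr list \<Rightarrow> nat \<Rightarrow> nat \<Rightarrow> (nat \<Rightarrow> nat) \<Rightarrow> nat \<Rightarrow> (nat \<Rightarrow> nat) \<Rightarrow> bool" where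
  "sym_transition p a l R l' R' \<longleftrightarrow> a \<noteq> 0 \<and> valid_sym p a \<and> label_of a = l \<and> target p a = l'
     \<and> (\<forall>r. tests_zero p r a \<longrightarrow> R r = 0)
     \<and> (\<forall>r. int (R' r) = int (R r) + (if incs p r a then 1 else 0) - (if decs p r a then 1 else 0))"

lemma sym_transition_of_step:
  assumes step: "step p (l, R) = Some (l', R')"
  shows "\<exists>a. sym_transition p a l R l' R'"
proof -
  from step have l: "l < length p" by (simp split: if_splits)
  show ?thesis
  proof (cases "p ! l")
    case (Inc r t)
    with step l have "sym_transition p (2 * l + 1) l R l' R'"
      by (auto simp: sym_transition_def valid_sym_def target_def incs_def decs_def tests_zero_def)
    then show ?thesis ..
  next
    case (Dec r l1 l2)
    show ?thesis
    proof (cases "R r = 0")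
      case True
      with Dec step l have "sym_transition p (2 * l + 2) l R l' R'"
        by (auto simp: sym_transition_def valid_sym_def target_def incs_def decs_def tests_zero_def)
      then show ?thesis ..
    next
      case False
      with Dec step l have "sym_transition p (2 * l + 1) l R l' R'"
        by (auto simp: sym_transition_def valid_sym_def target_def incs_def decs_def tests_zero_def
            of_nat_diff)
      then show ?thesis ..
    qed
  qed
qed

text \<open>A decrement needs no enabledness condition: \<open>R'\<close> takes values in \<open>nat\<close>.\<close>

lemma step_of_sym_transition:
  assumes "sym_transition p a l R l' R'"
  shows "step p (l, R) = Some (l', R')"
proof -
  from assms have a: "a \<noteq> 0" "valid_sym p a" "label_of a = l" "target p a = l'"
    and zero: "\<forall>r. tests_zero p r a \<longrightarrow> R r = 0"
    and eff: "\<forall>r. int (R' r) = int (R r) + (if incs p r a then 1 else 0) - (if decs p r a then 1 else 0)"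
    by (simp_all add: sym_transition_def)
  from a have l: "l < length p" by (auto simp: valid_sym_def)
  from eff have R': "R' = (\<lambda>r. nat (int (R r) + (if incs p r a then 1 else 0) - (if decs p r a then 1 else 0)))"
    unfolding fun_eq_iff by (metis nat_int)
  show ?thesis
  proof (cases "p ! l")
    case (Inc r t)
    with a have "\<not> zero_branch a" "l' = t" by (auto simp: valid_sym_def target_def)
    with Inc a l R' show ?thesis by (auto simp: incs_def decs_def fun_eq_iff)
  next
    case (Dec r l1 l2)
    show ?thesis
    proof (cases "zero_branch a")
      case True
      with Dec a zero R' l show ?thesis
        by (auto simp: incs_def decs_def tests_zero_def target_def fun_eq_iff)
    next
      case False
      with Dec a have "decs p r a" "\<not> incs p r a" by (simp_all add: decs_def incs_def)
      then have "int (R' r) = int (R r) - 1" using eff by simp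
      then have "R r \<noteq> 0" by linarith
      with False Dec a R' l show ?thesis
        by (auto simp: incs_def decs_def target_def fun_eq_iff)
    qed
  qed
qed

text \<open>A control token starts at label \<open>0\<close> and every transition symbol moves it from its
  label to its target, so \<open>balance p q u\<close> is \<open>1\<close> exactly at the current label.\<close>

definition balance :: "instr list \<Rightarrow> nat \<Rightarrow> nat list \<Rightarrow> int" where
  "balance p q u = (if q = 0 then 1 else 0)
     + int (cnt (\<lambda>a. valid_sym p a \<and> a \<noteq> 0 \<and> target p a = q) u)
     - int (cnt (\<lambda>a. valid_sym p a \<and> a \<noteq> 0 \<and> label_of a = q) u)"

definition reg_val :: "instr list \<Rightarrow> nat \<Rightarrow> nat list \<Rightarrow> int" where
  "reg_val p r u = int (cnt (\<lambda>a. valid_sym p a \<and> incs p r a) u) - int (cnt (\<lambda>a. valid_sym p a \<and> decs p r a) u)"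

definition good_prefix :: "instr list \<Rightarrow> nat \<Rightarrow> nat list \<Rightarrow> bool" where
  "good_prefix p x u \<longleftrightarrow> valid_sym p (last u)
     \<and> (last u = 0 \<longrightarrow> (\<forall>a\<in>set (butlast u). a = 0))
     \<and> (last u \<noteq> 0 \<longrightarrow> cnt (\<lambda>a. a = 0) u = x)
     \<and> (\<forall>q. balance p q u = (if target p (last u) = q then 1 else 0))
     \<and> (\<forall>r. 0 \<le> reg_val p r u)
     \<and> (\<forall>r. tests_zero p r (last u) \<longrightarrow> reg_val p r u = 0)"

definition all_prefixes_good :: "instr list \<Rightarrow> nat \<Rightarrow> nat list \<Rightarrow> bool" where
  "all_prefixes_good p x w \<longleftrightarrow> (\<forall>i. 1 \<le> i \<and> i \<le> length w \<longrightarrow> good_prefix p x (take i w))"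

definition run_word :: "instr list \<Rightarrow> nat \<Rightarrow> nat \<Rightarrow> nat list \<Rightarrow> bool" where
  "run_word p x H w \<longleftrightarrow> w \<noteq> [] \<and> all_prefixes_good p x w \<and> target p (last w) = H"

definition initial :: "nat \<Rightarrow> config" where
  "initial x = (0, (\<lambda>_. 0)(0 := x))"

definition balanced_at :: "instr list \<Rightarrow> nat list \<Rightarrow> nat \<Rightarrow> bool" where
  "balanced_at p u l \<longleftrightarrow> (\<forall>q. balance p q u = (if q = l then 1 else 0)) \<and> (\<forall>r. 0 \<le> reg_val p r u)"

lemma balance_Nil: "balance p q [] = (if q = 0 then 1 else 0)"
  by (simp add: balance_def)

lemma balance_snoc: "balance p q (u @ [a]) = balance p q u
    + (if valid_sym p a \<and> a \<noteq> 0 \<and> target p a = q then 1 else 0)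
    - (if valid_sym p a \<and> a \<noteq> 0 \<and> label_of a = q then 1 else 0)"
  by (simp add: balance_def)

lemma reg_val_snoc: "reg_val p r (u @ [a]) = reg_val p r u
    + (if valid_sym p a \<and> incs p r a then 1 else 0) - (if valid_sym p a \<and> decs p r a then 1 else 0)"
  by (simp add: reg_val_def)

lemma balance_replicate_0: "balance p q (replicate n 0) = (if q = 0 then 1 else 0)"
  by (simp add: balance_def)

lemma reg_val_replicate_0: "reg_val p r (replicate n 0) = (if r = 0 then int n else 0)"
  by (simp add: reg_val_def incs_def decs_def)

lemma all_prefixes_good_snoc:
  "all_prefixes_good p x (u @ [a]) \<longleftrightarrow> all_prefixes_good p x u \<and> good_prefix p x (u @ [a])"
  unfolding all_prefixes_good_def by (auto simp: le_Suc_eq)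

lemma good_prefix_last: "all_prefixes_good p x u \<Longrightarrow> u \<noteq> [] \<Longrightarrow> good_prefix p x u"
  unfolding all_prefixes_good_def by (metis One_nat_def Suc_leI le_refl length_greater_0_conv take_all)

lemma all_prefixes_good_replicate_0: "all_prefixes_good p x (replicate n 0)"
  by (auto simp: all_prefixes_good_def good_prefix_def balance_replicate_0 reg_val_replicate_0
      tests_zero_def dest: in_set_butlastD)

definition run_inv :: "instr list \<Rightarrow> nat \<Rightarrow> nat list \<Rightarrow> nat \<Rightarrow> (nat \<Rightarrow> nat) \<Rightarrow> bool" where
  "run_inv p x u l R \<longleftrightarrow> (\<forall>q. balance p q u = (if q = l then 1 else 0))
     \<and> (\<forall>r. int (R r) = reg_val p r u) \<and> all_prefixes_good p x u \<and> cnt (\<lambda>a. a = 0) u = x"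

lemma run_inv_initial: "run_inv p x (replicate x 0) 0 ((\<lambda>_. 0)(0 := x))"
  by (simp add: run_inv_def balance_replicate_0 reg_val_replicate_0 all_prefixes_good_replicate_0)

lemma run_inv_step:
  assumes inv: "run_inv p x u l R" and step: "step p (l, R) = Some (l', R')"
  shows "\<exists>a. run_inv p x (u @ [a]) l' R'"
proof -
  from step obtain a where a: "a \<noteq> 0" "valid_sym p a" "label_of a = l" "target p a = l'"
    and zero: "\<forall>r. tests_zero p r a \<longrightarrow> R r = 0"
    and eff: "\<forall>r. int (R' r) = int (R r) + (if incs p r a then 1 else 0) - (if decs p r a then 1 else 0)"
    using sym_transition_of_step[OF step] unfolding sym_transition_def by blast
  from inv have bal: "\<forall>q. balance p q (u @ [a]) = (if q = l' then 1 else 0)"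
    using a by (auto simp: run_inv_def balance_snoc)
  moreover from inv have val: "\<forall>r. int (R' r) = reg_val p r (u @ [a])"
    using a(2) eff by (simp add: run_inv_def reg_val_snoc)
  moreover have "good_prefix p x (u @ [a])"
    unfolding good_prefix_def
  proof (intro conjI allI impI)
    show "cnt (\<lambda>a. a = 0) (u @ [a]) = x" using inv a(1) by (simp add: run_inv_def)
    fix r
    show "0 \<le> reg_val p r (u @ [a])" using val by (metis of_nat_0_le_iff)
    assume "tests_zero p r (last (u @ [a]))"
    then have "R r = 0" "reg_val p r (u @ [a]) = reg_val p r u"
      using zero tests_zero_not_incs_decs[of p r a] by (simp_all add: reg_val_snoc)
    moreover have "int (R r) = reg_val p r u" using inv by (simp add: run_inv_def)
    ultimately show "reg_val p r (u @ [a]) = 0" by simp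
  qed (use a bal in auto)
  ultimately have "run_inv p x (u @ [a]) l' R'"
    using inv a(1) by (simp add: run_inv_def all_prefixes_good_snoc)
  then show ?thesis ..
qed

lemma reach_run_inv: "reach p (initial x) (l, R) \<Longrightarrow> \<exists>u. run_inv p x u l R"
proof (induction "(l, R)" arbitrary: l R rule: rtranclp_induct)
  case base
  then show ?case using run_inv_initial by (auto simp: initial_def)
next
  case (step c)
  obtain l0 R0 where "c = (l0, R0)" by fastforce
  with step show ?case by (metis mstep_def run_inv_step)
qed

lemma run_word_of_reach:
  assumes "reach p (initial x) (H, R)" and "H \<noteq> 0"
  shows "\<exists>w. run_word p x H w"
proof -
  from assms(1) obtain u where inv: "run_inv p x u H R" by (blast dest: reach_run_inv)
  then have "balance p H u = 1" by (simp add: run_inv_def)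
  with \<open>H \<noteq> 0\<close> have "u \<noteq> []" by (auto simp: balance_Nil)
  with inv have "good_prefix p x u" by (simp add: run_inv_def good_prefix_last)
  with inv have "target p (last u) = H"
    unfolding run_inv_def good_prefix_def by (metis zero_neq_one)
  with inv \<open>u \<noteq> []\<close> have "run_word p x H u" by (simp add: run_word_def run_inv_def)
  then show ?thesis ..
qed

lemma balanced_at_good_prefix: "good_prefix p x u \<Longrightarrow> balanced_at p u (target p (last u))"
  by (simp add: good_prefix_def balanced_at_def)

lemma balanced_at_zeros: "\<forall>b\<in>set u. b = 0 \<Longrightarrow> balanced_at p u 0"
  using replicate_length_same[of u 0] balance_replicate_0[of p _ "length u"]
    reg_val_replicate_0[of p _ "length u"]
  by (simp add: balanced_at_def)

lemma step_of_good_snoc: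
  assumes good: "good_prefix p x (u @ [a])" and "a \<noteq> 0" and bal: "balanced_at p u l"
  shows "step p (l, \<lambda>r. nat (reg_val p r u)) = Some (target p a, \<lambda>r. nat (reg_val p r (u @ [a])))"
proof (rule step_of_sym_transition, unfold sym_transition_def, intro exI conjI allI impI)
  from good have valid: "valid_sym p a"
    and bal': "balance p (label_of a) (u @ [a]) = (if target p a = label_of a then 1 else 0)"
    and nonneg': "\<forall>r. 0 \<le> reg_val p r (u @ [a])"
    and zero': "\<forall>r. tests_zero p r a \<longrightarrow> reg_val p r (u @ [a]) = 0"
    by (simp_all add: good_prefix_def)
  show "a \<noteq> 0" "valid_sym p a" by fact+
  from bal' bal valid \<open>a \<noteq> 0\<close> show "label_of a = l"
    by (simp add: balanced_at_def balance_snoc split: if_splits)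
  fix r
  show "tests_zero p r a \<Longrightarrow> nat (reg_val p r u) = 0"
    using zero' valid tests_zero_not_incs_decs[of p r a] by (simp add: reg_val_snoc)
  show "int (nat (reg_val p r (u @ [a]))) = int (nat (reg_val p r u))
      + (if incs p r a then 1 else 0) - (if decs p r a then 1 else 0)"
    using bal nonneg' valid by (simp add: balanced_at_def reg_val_snoc)
qed simp

text \<open>A prefix without transition symbols consists of load symbols only, exactly \<open>x\<close> of them
  once a transition symbol follows.\<close>

lemma reach_of_all_prefixes_good:
  "all_prefixes_good p x u \<Longrightarrow> \<exists>a\<in>set u. a \<noteq> 0 \<Longrightarrow>
    reach p (initial x) (target p (last u), \<lambda>r. nat (reg_val p r u))"
proof (induction u rule: rev_induct)
  case (snoc a u)
  then have prefix: "all_prefixes_good p x u" and good: "good_prefix p x (u @ [a])"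
    by (simp_all add: all_prefixes_good_snoc)
  have "a \<noteq> 0"
  proof
    assume "a = 0"
    with good have "\<forall>b\<in>set u. b = 0" by (simp add: good_prefix_def)
    with snoc.prems(2) \<open>a = 0\<close> show False by auto
  qed
  obtain l where reach_u: "reach p (initial x) (l, \<lambda>r. nat (reg_val p r u))"
    and bal: "balanced_at p u l"
  proof (cases "\<exists>b\<in>set u. b \<noteq> 0")
    case True
    with prefix have "good_prefix p x u" by (auto intro: good_prefix_last)
    with snoc.IH[OF prefix True] show thesis by (blast intro: that balanced_at_good_prefix)
  next
    case False
    then have "cnt (\<lambda>b. b = 0) u = length u" by (simp add: cnt_def filter_True)
    with good \<open>a \<noteq> 0\<close> have "length u = x" by (simp add: good_prefix_def)
    with False have "(\<lambda>r. nat (reg_val p r u)) = (\<lambda>_. 0)(0 := x)"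
      using replicate_length_same[of u 0] reg_val_replicate_0[of p _ x] by (auto simp: fun_eq_iff)
    with False show thesis by (intro that[of 0]) (simp_all add: initial_def balanced_at_zeros)
  qed
  have "mstep p (l, \<lambda>r. nat (reg_val p r u)) (target p a, \<lambda>r. nat (reg_val p r (u @ [a])))"
    unfolding mstep_def using step_of_good_snoc[OF good \<open>a \<noteq> 0\<close> bal] .
  with reach_u show ?case by simp
qed simp

lemma reach_of_run_word:
  assumes "run_word p x H w" and "H \<noteq> 0"
  shows "\<exists>R. reach p (initial x) (H, R)"
proof -
  from assms have "last w \<in> set w" by (simp add: run_word_def)
  moreover have "last w \<noteq> 0"
  proof
    assume "last w = 0"
    with assms show False by (simp add: run_word_def)
  qed
  ultimately have "\<exists>a\<in>set w. a \<noteq> 0" by blast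
  with assms(1) have "reach p (initial x) (H, \<lambda>r. nat (reg_val p r w))"
    unfolding run_word_def using reach_of_all_prefixes_good by blast
  then show ?thesis by blast
qed

section \<open>C-RASP programs recognising runs\<close>

definition ctrue :: cform where
  "ctrue = Cmp LNil Eq 0"

primrec conj_list :: "cform list \<Rightarrow> cform" where
  "conj_list [] = ctrue"
| "conj_list (f # fs) = Conj f (conj_list fs)"

definition disj_list :: "cform list \<Rightarrow> cform" where
  "disj_list fs = Neg (conj_list (map Neg fs))"

definition cimp :: "cform \<Rightarrow> cform \<Rightarrow> cform" where
  "cimp f g = Neg (Conj f (Neg g))"

definition sym_in :: "nat list \<Rightarrow> cform" where
  "sym_in L = disj_list (map Sym L)"

definition count_diff :: "cform \<Rightarrow> cform \<Rightarrow> lsum" where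
  "count_diff f g = LCons 1 (Count f) (LCons (-1) (Count g) LNil)"

lemma sat_ctrue [simp]: "sat E ctrue w i"
  by (simp add: ctrue_def)

lemma sat_conj_list [simp]: "sat E (conj_list fs) w i \<longleftrightarrow> (\<forall>f\<in>set fs. sat E f w i)"
  by (induction fs) auto

lemma sat_disj_list [simp]: "sat E (disj_list fs) w i \<longleftrightarrow> (\<exists>f\<in>set fs. sat E f w i)"
  by (simp add: disj_list_def)

lemma sat_cimp [simp]: "sat E (cimp f g) w i \<longleftrightarrow> (sat E f w i \<longrightarrow> sat E g w i)"
  by (simp add: cimp_def)

lemma sat_sym_in [simp]:
  "sat E (sym_in L) w i \<longleftrightarrow> 1 \<le> i \<and> i \<le> length w \<and> w ! (i - 1) \<in> set L"
  by (auto simp: sym_in_def)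

lemma card_positions_prefix:
  "card {j. 1 \<le> j \<and> j \<le> i \<and> 1 \<le> j \<and> j \<le> length w \<and> P (w ! (j - 1))} = cnt P (take i w)"
proof (induction i)
  case (Suc i)
  have "{j. 1 \<le> j \<and> j \<le> Suc i \<and> 1 \<le> j \<and> j \<le> length w \<and> P (w ! (j - 1))}
      = {j. 1 \<le> j \<and> j \<le> i \<and> 1 \<le> j \<and> j \<le> length w \<and> P (w ! (j - 1))}
        \<union> (if i < length w \<and> P (w ! i) then {Suc i} else {})"
    by (auto simp: le_Suc_eq)
  with Suc.IH show ?case
    by (cases "i < length w") (simp_all add: take_Suc_conv_app_nth card_insert_if)
qed simp

lemma tval_Count_sym_in [simp]:
  "tval E (Count (sym_in L)) w i = int (cnt (\<lambda>a. a \<in> set L) (take i w))"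
  using card_positions_prefix[of i w "\<lambda>a. a \<in> set L"] by simp

lemma lval_count_diff [simp]:
  "lval E (count_diff (sym_in A) (sym_in B)) w i
     = int (cnt (\<lambda>a. a \<in> set A) (take i w)) - int (cnt (\<lambda>a. a \<in> set B) (take i w))"
  by (simp only: count_diff_def lval.simps tval_Count_sym_in)

text \<open>Labels and registers of \<open>p\<close> lie below these crude bounds, so finitely many counting
  constraints suffice.\<close>

primrec label_sum :: "instr \<Rightarrow> nat" where
  "label_sum (Inc r l) = l"
| "label_sum (Dec r l1 l2) = l1 + l2"

primrec reg_of :: "instr \<Rightarrow> nat" where
  "reg_of (Inc r l) = r"
| "reg_of (Dec r l1 l2) = r"

definition label_bound :: "instr list \<Rightarrow> nat" where
  "label_bound p = Suc (length p + sum_list (map label_sum p))"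

definition reg_bound :: "instr list \<Rightarrow> nat" where
  "reg_bound p = Suc (sum_list (map reg_of p))"

lemma label_sum_lt_label_bound: "l < length p \<Longrightarrow> label_sum (p ! l) < label_bound p"
  unfolding label_bound_def using elem_le_sum_list[of l "map label_sum p"] by simp

lemma reg_of_lt_reg_bound: "l < length p \<Longrightarrow> reg_of (p ! l) < reg_bound p"
  unfolding reg_bound_def using elem_le_sum_list[of l "map reg_of p"] by simp

lemma target_lt_label_bound: "valid_sym p a \<Longrightarrow> target p a < label_bound p"
  using label_sum_lt_label_bound[of "label_of a" p]
  by (cases "p ! label_of a") (auto simp: valid_sym_def target_def label_bound_def)

lemma label_of_lt_label_bound: "valid_sym p a \<Longrightarrow> a \<noteq> 0 \<Longrightarrow> label_of a < label_bound p"
  by (simp add: valid_sym_def label_bound_def)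

lemma reg_lt_reg_bound:
  assumes "valid_sym p a" and "incs p r a \<or> decs p r a \<or> tests_zero p r a"
  shows "r < reg_bound p"
  using assms reg_of_lt_reg_bound[of "label_of a" p]
  by (cases "a = 0"; cases "p ! label_of a")
    (auto simp: valid_sym_def incs_def decs_def tests_zero_def reg_bound_def)

lemma balance_beyond:
  assumes "label_bound p \<le> q"
  shows "balance p q u = 0"
proof -
  from assms have "q \<noteq> 0" by (simp add: label_bound_def)
  moreover have "\<not> (valid_sym p a \<and> a \<noteq> 0 \<and> target p a = q)" for a
    using assms target_lt_label_bound[of p a] by auto
  moreover have "\<not> (valid_sym p a \<and> a \<noteq> 0 \<and> label_of a = q)" for a
    using assms label_of_lt_label_bound[of p a] by auto
  ultimately show ?thesis by (simp add: balance_def cnt_def)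
qed

lemma reg_val_beyond:
  assumes "reg_bound p \<le> r"
  shows "reg_val p r u = 0"
proof -
  have "\<not> (valid_sym p a \<and> incs p r a)" "\<not> (valid_sym p a \<and> decs p r a)" for a
    using assms reg_lt_reg_bound[of p a r] by auto
  then show ?thesis by (simp add: reg_val_def cnt_def)
qed

lemma good_prefix_bounded: "good_prefix p x u \<longleftrightarrow> valid_sym p (last u)
     \<and> (last u = 0 \<longrightarrow> (\<forall>a\<in>set (butlast u). a = 0))
     \<and> (last u \<noteq> 0 \<longrightarrow> cnt (\<lambda>a. a = 0) u = x)
     \<and> (\<forall>q<label_bound p. balance p q u = (if target p (last u) = q then 1 else 0))
     \<and> (\<forall>r<reg_bound p. 0 \<le> reg_val p r u)
     \<and> (\<forall>r<reg_bound p. tests_zero p r (last u) \<longrightarrow> reg_val p r u = 0)"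
proof -
  have all_below: "(\<forall>n. P n) \<longleftrightarrow> (\<forall>n<B. P n)" if "\<And>n. B \<le> n \<Longrightarrow> P n" for P and B :: nat
    using that not_le by blast
  have "(\<forall>q. balance p q u = (if target p (last u) = q then 1 else 0))
      \<longleftrightarrow> (\<forall>q<label_bound p. balance p q u = (if target p (last u) = q then 1 else 0))"
    if "valid_sym p (last u)"
    using target_lt_label_bound[OF that] by (intro all_below) (simp add: balance_beyond)
  moreover have "(\<forall>r. 0 \<le> reg_val p r u) \<longleftrightarrow> (\<forall>r<reg_bound p. 0 \<le> reg_val p r u)"
    by (intro all_below) (simp add: reg_val_beyond)
  moreover have "(\<forall>r. tests_zero p r (last u) \<longrightarrow> reg_val p r u = 0)
      \<longleftrightarrow> (\<forall>r<reg_bound p. tests_zero p r (last u) \<longrightarrow> reg_val p r u = 0)"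
    by (intro all_below) (simp add: reg_val_beyond)
  ultimately show ?thesis unfolding good_prefix_def by blast
qed

definition syms_with :: "(nat \<Rightarrow> bool) \<Rightarrow> instr list \<Rightarrow> nat list" where
  "syms_with P p = filter (\<lambda>a. valid_sym p a \<and> P a) [0..<2 * length p + 1]"

lemma set_syms_with [simp]: "set (syms_with P p) = {a. valid_sym p a \<and> P a}"
  by (auto simp: syms_with_def dest: valid_sym_bound simp del: upt_Suc)

definition load_line :: "nat \<Rightarrow> cform" where
  "load_line x = Cmp (LCons 1 (Count (Sym 0)) LNil) Eq (int x)"

definition load_form :: cform where
  "load_form = Conj (cimp (Sym 0) (Neg (Prev (Neg (Sym 0))))) (cimp (Neg (Sym 0)) (Ref 0))"

definition balance_form :: "instr list \<Rightarrow> nat \<Rightarrow> cform" where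
  "balance_form p q =
    (let d = count_diff (sym_in (syms_with (\<lambda>a. a \<noteq> 0 \<and> target p a = q) p))
               (sym_in (syms_with (\<lambda>a. a \<noteq> 0 \<and> label_of a = q) p));
         c = (if q = 0 then 1 else 0);
         T = sym_in (syms_with (\<lambda>a. target p a = q) p)
     in Conj (cimp T (Cmp d Eq (1 - c))) (cimp (Neg T) (Cmp d Eq (- c))))"

definition reg_val_sum :: "instr list \<Rightarrow> nat \<Rightarrow> lsum" where
  "reg_val_sum p r = count_diff (sym_in (syms_with (incs p r) p)) (sym_in (syms_with (decs p r) p))"

definition good_form :: "instr list \<Rightarrow> cform" where
  "good_form p = conj_list [sym_in (syms_with (\<lambda>_. True) p), load_form,
     conj_list (map (balance_form p) [0..<label_bound p]),
     conj_list (map (\<lambda>r. Cmp (reg_val_sum p r) Ge 0) [0..<reg_bound p]),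
     conj_list (map (\<lambda>r. cimp (sym_in (syms_with (tests_zero p r) p)) (Cmp (reg_val_sum p r) Eq 0))
       [0..<reg_bound p])]"

definition run_form :: "instr list \<Rightarrow> nat \<Rightarrow> cform" where
  "run_form p H = Conj (Hist (good_form p)) (sym_in (syms_with (\<lambda>a. target p a = H) p))"

lemma last_take_nth: "1 \<le> i \<Longrightarrow> i \<le> length w \<Longrightarrow> last (take i w) = w ! (i - 1)"
  by (subst last_conv_nth) (auto simp: min_def)

lemma sat_Prev_Neg_Sym:
  "sat E (Prev (Neg (Sym a))) w i \<longleftrightarrow> (\<exists>b\<in>set (take (i - 1) w). b \<noteq> a)" if "i \<le> length w"
proof
  assume "sat E (Prev (Neg (Sym a))) w i"
  then obtain j where j: "1 \<le> j" "j < i" "\<not> (1 \<le> j \<and> j \<le> length w \<and> w ! (j - 1) = a)"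
    by auto
  with that have "j - 1 < length (take (i - 1) w)" "take (i - 1) w ! (j - 1) \<noteq> a" by auto
  then show "\<exists>b\<in>set (take (i - 1) w). b \<noteq> a" using nth_mem by blast
next
  assume "\<exists>b\<in>set (take (i - 1) w). b \<noteq> a"
  then obtain k where "k < i - 1" "w ! k \<noteq> a" by (auto simp: in_set_conv_nth)
  then show "sat E (Prev (Neg (Sym a))) w i" by (auto intro!: exI[of _ "Suc k"])
qed

lemma sat_Ref_load_line:
  "sat [sat [] (load_line x)] (Ref 0) w i \<longleftrightarrow> cnt (\<lambda>b. b = 0) (take i w) = x"
  unfolding load_line_def using card_positions_prefix[of i w "\<lambda>b. b = 0"] by simp

lemma sat_load_form:
  assumes "1 \<le> i" "i \<le> length w"
  shows "sat [sat [] (load_line x)] load_form w i \<longleftrightarrow>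
    (w ! (i - 1) = 0 \<longrightarrow> (\<forall>a\<in>set (take (i - 1) w). a = 0))
    \<and> (w ! (i - 1) \<noteq> 0 \<longrightarrow> cnt (\<lambda>a. a = 0) (take i w) = x)"
  unfolding load_form_def sat_cimp sat.simps(5,6) sat_Prev_Neg_Sym[OF assms(2)] sat_Ref_load_line
  using assms by auto

lemma sat_balance_form:
  assumes "1 \<le> i" "i \<le> length w"
  shows "sat E (balance_form p q) w i \<longleftrightarrow> balance p q (take i w)
    = (if valid_sym p (w ! (i - 1)) \<and> target p (w ! (i - 1)) = q then 1 else 0)"
  using assms by (auto simp: balance_form_def balance_def Let_def)

lemma lval_reg_val_sum [simp]: "lval E (reg_val_sum p r) w i = reg_val p r (take i w)"
  by (simp add: reg_val_sum_def reg_val_def)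

lemma sat_good_form:
  assumes "1 \<le> i" "i \<le> length w"
  shows "sat [sat [] (load_line x)] (good_form p) w i \<longleftrightarrow> good_prefix p x (take i w)"
proof -
  let ?E = "[sat [] (load_line x)]"
  have "sat ?E (good_form p) w i \<longleftrightarrow> sat ?E (sym_in (syms_with (\<lambda>_. True) p)) w i
      \<and> sat ?E load_form w i \<and> (\<forall>q<label_bound p. sat ?E (balance_form p q) w i)
      \<and> (\<forall>r<reg_bound p. 0 \<le> reg_val p r (take i w))
      \<and> (\<forall>r<reg_bound p. sat ?E (sym_in (syms_with (tests_zero p r) p)) w i
           \<longrightarrow> reg_val p r (take i w) = 0)"
    by (simp add: good_form_def) (simp add: Ball_def)
  also have "\<dots> \<longleftrightarrow> good_prefix p x (take i w)"
    unfolding good_prefix_bounded sat_load_form[OF assms] sat_balance_form[OF assms]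
      last_take_nth[OF assms] butlast_take[OF assms(2)]
    using assms by auto
  finally show ?thesis .
qed

lemma accepts_run_program: "accepts [load_line x, run_form p H] w \<longleftrightarrow> run_word p x H w"
proof -
  have "accepts [load_line x, run_form p H] w \<longleftrightarrow> sat [sat [] (load_line x)] (run_form p H) w (length w)"
    by (simp add: accepts_def prog_den_def)
  also have "\<dots> \<longleftrightarrow> run_word p x H w"
  proof (cases "w = []")
    case False
    then have "all_prefixes_good p x w \<Longrightarrow> valid_sym p (last w)"
      by (auto simp: good_prefix_def dest: good_prefix_last)
    with False show ?thesis
      unfolding run_form_def run_word_def all_prefixes_good_def
      by (auto simp: sat_good_form last_conv_nth Suc_le_eq)
  qed (simp add: run_form_def run_word_def)
  finally show ?thesis .
qed

lemma valid_sym_of_all_prefixes_good: "all_prefixes_good p x w \<Longrightarrow> a \<in> set w \<Longrightarrow> valid_sym p a"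
proof -
  assume good: "all_prefixes_good p x w" and "a \<in> set w"
  then obtain j where j: "j < length w" "w ! j = a" by (auto simp: in_set_conv_nth)
  with good have "good_prefix p x (take (Suc j) w)" by (simp add: all_prefixes_good_def)
  with j show ?thesis by (simp add: good_prefix_def last_take_nth)
qed

theorem lang_run_program_nonempty_iff:
  assumes "H \<noteq> 0" and "\<forall>a. valid_sym p a \<longrightarrow> a < n"
  shows "lang n [load_line x, run_form p H] \<noteq> {} \<longleftrightarrow> (\<exists>R. reach p (initial x) (H, R))"
proof
  assume "lang n [load_line x, run_form p H] \<noteq> {}"
  then obtain w where "run_word p x H w" by (auto simp: lang_def accepts_run_program)
  from this assms(1) show "\<exists>R. reach p (initial x) (H, R)" by (rule reach_of_run_word)
next
  assume "\<exists>R. reach p (initial x) (H, R)"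
  with assms(1) obtain w where w: "run_word p x H w" by (blast dest: run_word_of_reach)
  then have "set w \<subseteq> {..<n}"
    using assms(2) valid_sym_of_all_prefixes_good by (auto simp: run_word_def)
  with w show "lang n [load_line x, run_form p H] \<noteq> {}"
    by (auto simp: lang_def accepts_run_program)
qed

lemma prod_encode_lessD: "prod_encode (a, b) < k \<Longrightarrow> a < k \<and> b < k"
  using le_prod_encode_1[of a b] le_prod_encode_2[of b a] by linarith

lemma wf_below_encoding:
  "wf_form n m f \<Longrightarrow> enc_form f < k \<Longrightarrow> wf_form k m f"
  "wf_term n m t \<Longrightarrow> enc_term t < k \<Longrightarrow> wf_term k m t"
  "wf_lsum n m s \<Longrightarrow> enc_lsum s < k \<Longrightarrow> wf_lsum k m s"
  by (induction f and t and s) (auto dest!: prod_encode_lessD Suc_lessD)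

lemma wf_conj_list [simp]: "wf_form n m (conj_list fs) \<longleftrightarrow> (\<forall>f\<in>set fs. wf_form n m f)"
  by (induction fs) (auto simp: ctrue_def)

lemma wf_sym_in [simp]: "wf_form n m (sym_in L) \<longleftrightarrow> (\<forall>a\<in>set L. a < n)"
  by (simp add: sym_in_def disj_list_def)

lemma wf_run_form: "wf_form (Suc (2 * length p)) 1 (run_form p H)"
  using valid_sym_bound[of p]
  by (simp add: run_form_def good_form_def load_form_def balance_form_def reg_val_sum_def
      count_diff_def cimp_def ctrue_def Let_def)

lemma wf_run_form_below_encoding: "wf_form (Suc (enc_form (run_form p H))) 1 (run_form p H)"
  by (rule wf_below_encoding(1)[OF wf_run_form]) simp

lemma valid_sym_lt_enc_run_form: "valid_sym p a \<Longrightarrow> a < Suc (enc_form (run_form p H))"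
  using wf_run_form_below_encoding[of p H] by (simp add: run_form_def good_form_def)

lemma wf_prog_run_program:
  "wf_prog (Suc (enc_form (run_form p H))) [load_line (enc_form (run_form p H)), run_form p H]"
  using wf_run_form_below_encoding[of p H] by (auto simp: wf_prog_def less_Suc_eq load_line_def)

section \<open>The diagonal argument\<close>

definition rpair :: "recf \<Rightarrow> recf \<Rightarrow> recf" where
  "rpair g h = Comp rprod_encode [g, h]"

lemma eval_rpair: "eval g xs a \<Longrightarrow> eval h xs b \<Longrightarrow> eval (rpair g h) xs (prod_encode (a, b))"
  unfolding rpair_def by (rule eval_Comp2) (auto intro: eval_rprod_encode)

definition load_line_rf :: recf where
  "load_line_rf = rpair (rconst 6) (rpair (rconst (enc_lsum (LCons 1 (Count (Sym 0)) LNil)))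
     (rpair (rconst 2) (Comp radd [Proj 0, Proj 0])))"

lemma eval_load_line_rf: "eval load_line_rf [c] (enc_form (load_line c))"
proof -
  have "eval (Comp radd [Proj 0, Proj 0]) [c] (int_encode (int c))"
    by (auto intro!: eval_Comp2 eval_Proj_eq eval_radd_eq simp: int_encode_def sum_encode_def)
  then show ?thesis
    unfolding load_line_rf_def load_line_def enc_form.simps enc_cmp.simps
    by (intro eval_rpair eval_rconst)
qed

definition instance_rf :: recf where
  "instance_rf = rpair (Comp S [Proj 0]) (Comp S [rpair load_line_rf (Comp S [rpair (Proj 0) Z])])"

text \<open>The instance \<open>(Suc c, [load_line c, f])\<close> depends on \<open>f\<close> only through \<open>c = enc_form f\<close>.\<close>

lemma eval_instance_rf:
  "eval instance_rf [enc_form f] (enc_instance (Suc (enc_form f)) [load_line (enc_form f), f])"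
  unfolding instance_rf_def enc_instance_def list.map list_encode.simps
  by (intro eval_rpair eval_Comp_S eval_Proj0 eval_load_line_rf eval_Z)

definition branch_machine :: "recf \<Rightarrow> instr list" where
  "branch_machine h = (let C = compile h [0] 1 2 0 in C @ [Dec 1 (length C + 1) (length C + 2)])"

lemma reach_end_branch_machine:
  assumes "eval h [x] v"
  shows "(\<exists>R. reach (branch_machine h) (initial x) (length (branch_machine h), R)) \<longleftrightarrow> v \<noteq> 0"
proof -
  define C where "C = compile h [0] 1 2 0"
  define P where "P = branch_machine h"
  have P: "P = C @ [Dec 1 (length C + 1) (length C + 2)]"
    by (simp add: P_def C_def branch_machine_def Let_def)
  have "code_at P 0 C" "code_at P (length C) [Dec 1 (length C + 1) (length C + 2)]"
    using code_at_self[of P] by (simp_all add: P)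
  then obtain R where run: "reach P (initial x) (length C, R)" and "R 1 = v"
    using computesD[OF compile_correct[OF assms], of "(\<lambda>_. 0)(0 := x)" "[0]" 2 1 P 0]
    by (auto simp: initial_def C_def)
  show ?thesis
    unfolding P_def[symmetric]
  proof
    assume "\<exists>R'. reach P (initial x) (length P, R')"
    then obtain R' where R': "reach P (initial x) (length P, R')" ..
    show "v \<noteq> 0"
    proof
      assume "v = 0"
      with \<open>R 1 = v\<close> have "mstep P (length C, R) (length C + 2, R)"
        using mstep_Dec_zero[OF \<open>code_at P (length C) _\<close>] by simp
      with run have "reach P (initial x) (length C + 2, R)" by simp
      moreover have "step P (length C + 2, R) = None" "step P (length P, R') = None" by (simp_all add: P)
      ultimately have "(length C + 2, R) = (length P, R')"
        using R' reach_halted reach_from_halted by metis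
      then show False by (simp add: P)
    qed
  next
    assume "v \<noteq> 0"
    with \<open>R 1 = v\<close> have "mstep P (length C, R) (length C + 1, R(1 := R 1 - 1))"
      using mstep_Dec_pos[OF \<open>code_at P (length C) _\<close>, of R] by simp
    moreover have "length C + 1 = length P" by (simp add: P)
    ultimately show "\<exists>R'. reach P (initial x) (length P, R')"
      using run by (metis rtranclp.rtrancl_into_rtrancl)
  qed
qed

theorem theorem3p1:
  shows "\<not> (\<exists>f :: recf. \<forall>n ps. wf_prog n ps \<longrightarrow>
            eval f [enc_instance n ps] (if lang n ps = {} then 1 else 0))"
proof
  assume "\<exists>f :: recf. \<forall>n ps. wf_prog n ps \<longrightarrow>
            eval f [enc_instance n ps] (if lang n ps = {} then 1 else 0)"
  then obtain f where decides: "\<And>n ps. wf_prog n ps \<Longrightarrow>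
      eval f [enc_instance n ps] (if lang n ps = {} then 1 else 0)"
    by blast
  define P where "P = branch_machine (Comp f [instance_rf])"
  define c where "c = enc_form (run_form P (length P))"
  define ps where "ps = [load_line c, run_form P (length P)]"
  have "eval instance_rf [c] (enc_instance (Suc c) ps)"
    unfolding c_def ps_def by (rule eval_instance_rf)
  moreover have "eval f [enc_instance (Suc c) ps] (if lang (Suc c) ps = {} then 1 else 0)"
    unfolding c_def ps_def by (rule decides[OF wf_prog_run_program])
  ultimately have "eval (Comp f [instance_rf]) [c] (if lang (Suc c) ps = {} then 1 else 0)"
    by (rule eval_Comp1)
  then have "(\<exists>R. reach P (initial c) (length P, R))
      \<longleftrightarrow> (if lang (Suc c) ps = {} then 1 else 0) \<noteq> (0 :: nat)"
    unfolding P_def by (rule reach_end_branch_machine)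
  then have "(\<exists>R. reach P (initial c) (length P, R)) \<longleftrightarrow> lang (Suc c) ps = {}" by simp
  moreover have "length P \<noteq> 0" by (simp add: P_def branch_machine_def Let_def)
  then have "lang (Suc c) ps \<noteq> {} \<longleftrightarrow> (\<exists>R. reach P (initial c) (length P, R))"
    unfolding ps_def c_def using valid_sym_lt_enc_run_form by (intro lang_run_program_nonempty_iff) auto
  ultimately show False by blast
qed

end
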